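(* Let $A$ be a Hopf algebra with bijective antipode $S$, and let $\triangleright_1$ and $\triangleright_2$ be two actions of $A$ on an algebra $R$, each making $R$ a left $A$-module algebra. Suppose they are cocycle equivalent: there is a linear map $\gamma:A\to M(R)$ with $\gamma(1)=1$ such that for all $a,a'\in A$ and $x\in R$, (i) $\gamma(aa')=\sum\gamma(a_{(1)})\big(a_{(2)}\triangleright_1\gamma(a')\big)$, and (ii) $\sum(a_{(1)}\triangleright_2 x)\gamma(a_{(2)})=\sum\gamma(a_{(1)})(a_{(2)}\triangleright_1 x)$. Then the smash products $R\#_1 A$ and $R\#_2 A$ (built from $\triangleright_1$ and $\triangleright_2$ respectively) are isomorphic algebras.
   Context: $R$ is an algebra over $\mathbb C$, possibly without identity, with non-degenerate product; $M(R)$ its multiplier algebra. A left $A$-module algebra structure $\triangleright$ on $R$ means $R$ is a left $A$-module with $1\triangleright x=x$ and $a\triangleright(xx')=\sum(a_{(1)}\triangleright x)(a_{(2)}\triangleright x')$. The action $\triangleright_1$ is extended to $M(R)$ by letting $a\triangleright_1 m\in M(R)$ be the multiplier with $(a\triangleright_1 m)x=\sum a_{(1)}\triangleright_1(m(S(a_{(2)})\triangleright_1 x))$ and $x(a\triangleright_1 m)=\sum a_{(2)}\triangleright_1((S^{-1}(a_{(1)})\triangleright_1 x)m)$. The smash product $R\#_i A$ is $R\otimes A$ with product $(x\#_i a)(x'\#_i a')=\sum x(a_{(1)}\triangleright_i x')\#_i a_{(2)}a'$. *)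

theory Defs
  imports Complex_Main
begin

text \<open>
Complex vector spaces are carrier types equipped with an explicit scalar
multiplication satisfying the library locale vector_space.  The Hopf algebra A is a type
'a of class ring_1 with scalar multiplication sA; the algebra R (possibly without unit)
is a type 'r of class ring with scalar multiplication sR.

Tensor products: an element of a tensor product U (x) V of complex vector spaces is modelled
faithfully (injectively) by the functional it induces on bilinear forms U x V -> C; a finite
list of pairs [(u_i, v_i)] represents the tensor sum_i u_i (x) v_i.  The coproduct is given by
a function Delta returning such a list (a representative of Delta a); Sweedler sums are sums
over this list.  All equalities of tensors are stated through the induced functionals.
\<close>

definition bilin_form :: "(complex \<Rightarrow> 'u::ab_group_add \<Rightarrow> 'u) \<Rightarrow> (complex \<Rightarrow> 'v::ab_group_add \<Rightarrow> 'v)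
    \<Rightarrow> ('u \<Rightarrow> 'v \<Rightarrow> complex) \<Rightarrow> bool" where
  "bilin_form sU sV \<phi> \<longleftrightarrow>
     (\<forall>v. Vector_Spaces.linear sU (*) (\<lambda>u. \<phi> u v)) \<and> (\<forall>u. Vector_Spaces.linear sV (*) (\<phi> u))"

definition trilin_form :: "(complex \<Rightarrow> 'u::ab_group_add \<Rightarrow> 'u) \<Rightarrow> ('u \<Rightarrow> 'u \<Rightarrow> 'u \<Rightarrow> complex) \<Rightarrow> bool" where
  "trilin_form sU \<phi> \<longleftrightarrow>
     (\<forall>v w. Vector_Spaces.linear sU (*) (\<lambda>u. \<phi> u v w)) \<and>
     (\<forall>u w. Vector_Spaces.linear sU (*) (\<lambda>v. \<phi> u v w)) \<and>
     (\<forall>u v. Vector_Spaces.linear sU (*) (\<lambda>w. \<phi> u v w))"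

definition tens :: "(complex \<Rightarrow> 'u::ab_group_add \<Rightarrow> 'u) \<Rightarrow> (complex \<Rightarrow> 'v::ab_group_add \<Rightarrow> 'v) \<Rightarrow> ('u \<times> 'v) list
    \<Rightarrow> (('u \<Rightarrow> 'v \<Rightarrow> complex) \<Rightarrow> complex)" where
  "tens sU sV xs = (\<lambda>\<phi>. if bilin_form sU sV \<phi> then (\<Sum>(u, v)\<leftarrow>xs. \<phi> u v) else 0)"

definition tensor_space :: "(complex \<Rightarrow> 'u::ab_group_add \<Rightarrow> 'u) \<Rightarrow> (complex \<Rightarrow> 'v::ab_group_add \<Rightarrow> 'v)
    \<Rightarrow> (('u \<Rightarrow> 'v \<Rightarrow> complex) \<Rightarrow> complex) set" where
  "tensor_space sU sV = range (tens sU sV)"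

definition tadd :: "(('u \<Rightarrow> 'v \<Rightarrow> complex) \<Rightarrow> complex) \<Rightarrow> (('u \<Rightarrow> 'v \<Rightarrow> complex) \<Rightarrow> complex)
    \<Rightarrow> (('u \<Rightarrow> 'v \<Rightarrow> complex) \<Rightarrow> complex)" where
  "tadd t t' = (\<lambda>\<phi>. t \<phi> + t' \<phi>)"

definition tscale :: "complex \<Rightarrow> (('u \<Rightarrow> 'v \<Rightarrow> complex) \<Rightarrow> complex)
    \<Rightarrow> (('u \<Rightarrow> 'v \<Rightarrow> complex) \<Rightarrow> complex)" where
  "tscale c t = (\<lambda>\<phi>. c * t \<phi>)"

definition trep :: "(complex \<Rightarrow> 'u::ab_group_add \<Rightarrow> 'u) \<Rightarrow> (complex \<Rightarrow> 'v::ab_group_add \<Rightarrow> 'v)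
    \<Rightarrow> (('u \<Rightarrow> 'v \<Rightarrow> complex) \<Rightarrow> complex) \<Rightarrow> ('u \<times> 'v) list" where
  "trep sU sV t = (SOME xs. tens sU sV xs = t)"

definition cplx_algebra :: "(complex \<Rightarrow> 'a::ring \<Rightarrow> 'a) \<Rightarrow> bool" where
  "cplx_algebra s \<longleftrightarrow> vector_space s \<and>
     (\<forall>c a b. s c (a * b) = s c a * b \<and> s c (a * b) = a * s c b)"

definition nondegenerate :: "'r::ring itself \<Rightarrow> bool" where
  "nondegenerate _ \<longleftrightarrow> (\<forall>x::'r. (\<forall>y. x * y = 0) \<longrightarrow> x = 0) \<and> (\<forall>x::'r. (\<forall>y. y * x = 0) \<longrightarrow> x = 0)"

definition hopf_algebra :: "(complex \<Rightarrow> 'a::ring_1 \<Rightarrow> 'a) \<Rightarrow> ('a \<Rightarrow> ('a \<times> 'a) list)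
    \<Rightarrow> ('a \<Rightarrow> complex) \<Rightarrow> ('a \<Rightarrow> 'a) \<Rightarrow> bool" where
  "hopf_algebra sA \<Delta> \<epsilon> S \<longleftrightarrow>
     cplx_algebra sA \<and>
     \<comment> \<open>Delta linear\<close>
     (\<forall>a b. tens sA sA (\<Delta> (a + b)) = tens sA sA (\<Delta> a @ \<Delta> b)) \<and>
     (\<forall>c a. tens sA sA (\<Delta> (sA c a)) = tens sA sA (map (\<lambda>(u, v). (sA c u, v)) (\<Delta> a))) \<and>
     \<comment> \<open>coassociativity\<close>
     (\<forall>a \<phi>. trilin_form sA \<phi> \<longrightarrow>
        (\<Sum>(u, v)\<leftarrow>\<Delta> a. \<Sum>(u1, u2)\<leftarrow>\<Delta> u. \<phi> u1 u2 v) =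
        (\<Sum>(u, v)\<leftarrow>\<Delta> a. \<Sum>(v1, v2)\<leftarrow>\<Delta> v. \<phi> u v1 v2)) \<and>
     \<comment> \<open>Delta algebra map\<close>
     (\<forall>a b. tens sA sA (\<Delta> (a * b)) =
        tens sA sA [(u * u', v * v'). (u, v) \<leftarrow> \<Delta> a, (u', v') \<leftarrow> \<Delta> b]) \<and>
     tens sA sA (\<Delta> 1) = tens sA sA [(1, 1)] \<and>
     \<comment> \<open>counit\<close>
     Vector_Spaces.linear sA (*) \<epsilon> \<and>
     (\<forall>a b. \<epsilon> (a * b) = \<epsilon> a * \<epsilon> b) \<and> \<epsilon> 1 = 1 \<and>
     (\<forall>a. (\<Sum>(u, v)\<leftarrow>\<Delta> a. sA (\<epsilon> u) v) = a) \<and>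
     (\<forall>a. (\<Sum>(u, v)\<leftarrow>\<Delta> a. sA (\<epsilon> v) u) = a) \<and>
     \<comment> \<open>antipode\<close>
     Vector_Spaces.linear sA sA S \<and>
     (\<forall>a. (\<Sum>(u, v)\<leftarrow>\<Delta> a. S u * v) = sA (\<epsilon> a) 1) \<and>
     (\<forall>a. (\<Sum>(u, v)\<leftarrow>\<Delta> a. u * S v) = sA (\<epsilon> a) 1)"

definition module_algebra :: "(complex \<Rightarrow> 'a::ring_1 \<Rightarrow> 'a) \<Rightarrow> ('a \<Rightarrow> ('a \<times> 'a) list)
    \<Rightarrow> (complex \<Rightarrow> 'r::ring \<Rightarrow> 'r) \<Rightarrow> ('a \<Rightarrow> 'r \<Rightarrow> 'r) \<Rightarrow> bool" where
  "module_algebra sA \<Delta> sR act \<longleftrightarrow>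
     (\<forall>x. Vector_Spaces.linear sA sR (\<lambda>a. act a x)) \<and>
     (\<forall>a. Vector_Spaces.linear sR sR (act a)) \<and>
     (\<forall>a b x. act (a * b) x = act a (act b x)) \<and>
     (\<forall>x. act 1 x = x) \<and>
     (\<forall>a x x'. act a (x * x') = (\<Sum>(u, v)\<leftarrow>\<Delta> a. act u x * act v x'))"

text \<open>Multipliers of R: pairs (L, Rm) (m x = L x, x m = Rm x) with (x m) y = x (m y).\<close>
type_synonym 'r mult = "('r \<Rightarrow> 'r) \<times> ('r \<Rightarrow> 'r)"

definition is_multiplier :: "'r::ring mult \<Rightarrow> bool" where
  "is_multiplier m \<longleftrightarrow> (\<forall>x y. snd m x * y = x * fst m y)"

definition mmult :: "'r mult \<Rightarrow> 'r mult \<Rightarrow> 'r mult" where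
  "mmult m n = (fst m \<circ> fst n, snd n \<circ> snd m)"

definition mone :: "'r mult" where
  "mone = (id, id)"

definition madd :: "'r::ring mult \<Rightarrow> 'r mult \<Rightarrow> 'r mult" where
  "madd m n = ((\<lambda>x. fst m x + fst n x), (\<lambda>x. snd m x + snd n x))"

definition mscale :: "(complex \<Rightarrow> 'r \<Rightarrow> 'r) \<Rightarrow> complex \<Rightarrow> 'r mult \<Rightarrow> 'r mult" where
  "mscale sR c m = ((\<lambda>x. sR c (fst m x)), (\<lambda>x. sR c (snd m x)))"

definition msum :: "'r::ring mult list \<Rightarrow> 'r mult" where
  "msum ms = foldr madd ms ((\<lambda>_. 0), (\<lambda>_. 0))"

definition act_mult :: "('a \<Rightarrow> ('a \<times> 'a) list) \<Rightarrow> ('a \<Rightarrow> 'a) \<Rightarrow> ('a \<Rightarrow> 'r::ring \<Rightarrow> 'r)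
    \<Rightarrow> 'a \<Rightarrow> 'r mult \<Rightarrow> 'r mult" where
  "act_mult \<Delta> S act a m =
     ((\<lambda>x. \<Sum>(u, v)\<leftarrow>\<Delta> a. act u (fst m (act (S v) x))),
      (\<lambda>x. \<Sum>(u, v)\<leftarrow>\<Delta> a. act v (snd m (act (inv S u) x))))"

definition cocycle_equivalent :: "(complex \<Rightarrow> 'a::ring_1 \<Rightarrow> 'a) \<Rightarrow> ('a \<Rightarrow> ('a \<times> 'a) list)
    \<Rightarrow> ('a \<Rightarrow> 'a) \<Rightarrow> (complex \<Rightarrow> 'r::ring \<Rightarrow> 'r) \<Rightarrow> ('a \<Rightarrow> 'r \<Rightarrow> 'r) \<Rightarrow> ('a \<Rightarrow> 'r \<Rightarrow> 'r)
    \<Rightarrow> ('a \<Rightarrow> 'r mult) \<Rightarrow> bool" where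
  "cocycle_equivalent sA \<Delta> S sR act1 act2 \<gamma> \<longleftrightarrow>
     (\<forall>a. is_multiplier (\<gamma> a)) \<and>
     (\<forall>a b. \<gamma> (a + b) = madd (\<gamma> a) (\<gamma> b)) \<and>
     (\<forall>c a. \<gamma> (sA c a) = mscale sR c (\<gamma> a)) \<and>
     \<gamma> 1 = mone \<and>
     (\<forall>a a'. \<gamma> (a * a') = msum [mmult (\<gamma> u) (act_mult \<Delta> S act1 v (\<gamma> a')). (u, v) \<leftarrow> \<Delta> a]) \<and>
     (\<forall>a x. (\<Sum>(u, v)\<leftarrow>\<Delta> a. snd (\<gamma> v) (act2 u x)) =
            (\<Sum>(u, v)\<leftarrow>\<Delta> a. fst (\<gamma> u) (act1 v x)))"

definition smash_mult :: "(complex \<Rightarrow> 'r::ring \<Rightarrow> 'r) \<Rightarrow> (complex \<Rightarrow> 'a::ring_1 \<Rightarrow> 'a)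
    \<Rightarrow> ('a \<Rightarrow> ('a \<times> 'a) list) \<Rightarrow> ('a \<Rightarrow> 'r \<Rightarrow> 'r)
    \<Rightarrow> (('r \<Rightarrow> 'a \<Rightarrow> complex) \<Rightarrow> complex) \<Rightarrow> (('r \<Rightarrow> 'a \<Rightarrow> complex) \<Rightarrow> complex)
    \<Rightarrow> (('r \<Rightarrow> 'a \<Rightarrow> complex) \<Rightarrow> complex)" where
  "smash_mult sR sA \<Delta> act t t' =
     tens sR sA [(x * act u x', v * a'). (x, a) \<leftarrow> trep sR sA t, (x', a') \<leftarrow> trep sR sA t', (u, v) \<leftarrow> \<Delta> a]"

definition smash_isomorphic :: "(complex \<Rightarrow> 'r::ring \<Rightarrow> 'r) \<Rightarrow> (complex \<Rightarrow> 'a::ring_1 \<Rightarrow> 'a)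
    \<Rightarrow> ('a \<Rightarrow> ('a \<times> 'a) list) \<Rightarrow> ('a \<Rightarrow> 'r \<Rightarrow> 'r) \<Rightarrow> ('a \<Rightarrow> 'r \<Rightarrow> 'r) \<Rightarrow> bool" where
  "smash_isomorphic sR sA \<Delta> act1 act2 \<longleftrightarrow>
     (\<exists>\<Phi>. bij_betw \<Phi> (tensor_space sR sA) (tensor_space sR sA) \<and>
        (\<forall>t\<in>tensor_space sR sA. \<forall>t'\<in>tensor_space sR sA.
           \<Phi> (tadd t t') = tadd (\<Phi> t) (\<Phi> t') \<and>
           \<Phi> (smash_mult sR sA \<Delta> act1 t t') = smash_mult sR sA \<Delta> act2 (\<Phi> t) (\<Phi> t')) \<and>
        (\<forall>c. \<forall>t\<in>tensor_space sR sA. \<Phi> (tscale c t) = tscale c (\<Phi> t)))"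

end

theory Submission
  imports Defs
begin

text \<open>
  Write \<open>x \<gamma>(a)\<close> for the right action of the multiplier \<open>\<gamma>(a)\<close> and put
  \<open>\<gamma>\<^sup>-\<^sup>1(a) = \<Sum> a\<^sub>1 \<triangleright>\<^sub>1 \<gamma>(S a\<^sub>2)\<close>. The cocycle identity (i) and the antipode axioms make
  \<open>\<gamma>\<close> and \<open>\<gamma>\<^sup>-\<^sup>1\<close> convolution inverse to each other, \<open>\<Sum> \<gamma>(a\<^sub>1) \<gamma>\<^sup>-\<^sup>1(a\<^sub>2) = \<epsilon>(a) = \<Sum> \<gamma>\<^sup>-\<^sup>1(a\<^sub>1) \<gamma>(a\<^sub>2)\<close>;
  the second identity needs that \<open>a \<triangleright>\<^sub>1 m\<close> is again a multiplier and that \<open>\<Delta> \<circ> S = (S \<otimes> S) \<circ> \<Delta>\<^sup>o\<^sup>p\<close>.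
  Hence \<open>x # a \<mapsto> \<Sum> x \<gamma>(a\<^sub>1) # a\<^sub>2\<close> is a linear bijection of \<open>R \<otimes> A\<close> with inverse
  \<open>x # a \<mapsto> \<Sum> x \<gamma>\<^sup>-\<^sup>1(a\<^sub>1) # a\<^sub>2\<close>, and condition (ii) together with (i) makes it multiplicative from
  \<open>R #\<^sub>2 A\<close> to \<open>R #\<^sub>1 A\<close>.

  Tensors are represented by lists of pure tensors only up to the functional they induce on bilinear
  forms, so every identity of Sweedler sums is proved for arbitrary (multi)linear expressions and
  transferred through linear functionals.
\<close>

section \<open>Linear maps and Sweedler sums\<close>

text \<open>Linearity without the module axioms built into \<open>Vector_Spaces.linear\<close>, so that it can be
  stated and composed for arbitrary scalar multiplications.\<close>

definition lin :: "(complex \<Rightarrow> 'u::ab_group_add \<Rightarrow> 'u) \<Rightarrow> (complex \<Rightarrow> 'v::ab_group_add \<Rightarrow> 'v)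
    \<Rightarrow> ('u \<Rightarrow> 'v) \<Rightarrow> bool" where
  "lin s t f \<longleftrightarrow> (\<forall>x y. f (x + y) = f x + f y) \<and> (\<forall>c x. f (s c x) = t c (f x))"

definition bilin :: "(complex \<Rightarrow> 'u::ab_group_add \<Rightarrow> 'u) \<Rightarrow> (complex \<Rightarrow> 'v::ab_group_add \<Rightarrow> 'v)
    \<Rightarrow> (complex \<Rightarrow> 'w::ab_group_add \<Rightarrow> 'w) \<Rightarrow> ('u \<Rightarrow> 'v \<Rightarrow> 'w) \<Rightarrow> bool" where
  "bilin s t r \<beta> \<longleftrightarrow> (\<forall>v. lin s r (\<lambda>u. \<beta> u v)) \<and> (\<forall>u. lin t r (\<beta> u))"

lemma bilinI: "(\<And>v. lin s r (\<lambda>u. \<beta> u v)) \<Longrightarrow> (\<And>u. lin t r (\<beta> u)) \<Longrightarrow> bilin s t r \<beta>"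
  by (simp add: bilin_def)

lemma bilin_linD:
  "bilin s t r \<beta> \<Longrightarrow> lin s r (\<lambda>u. \<beta> u v)" "bilin s t r \<beta> \<Longrightarrow> lin t r (\<beta> u)"
  by (simp_all add: bilin_def)

lemma lin_bilin_left: "bilin s t r \<beta> \<Longrightarrow> lin q s g \<Longrightarrow> lin q r (\<lambda>x. \<beta> (g x) y)"
  by (simp add: bilin_def lin_def)

lemma lin_bilin_right: "bilin s t r \<beta> \<Longrightarrow> lin q t g \<Longrightarrow> lin q r (\<lambda>x. \<beta> y (g x))"
  by (simp add: bilin_def lin_def)

lemma lin_add: "lin s t f \<Longrightarrow> f (x + y) = f x + f y"
  and lin_scale: "lin s t f \<Longrightarrow> f (s c x) = t c (f x)"
  by (simp_all add: lin_def)

lemma lin_zero: "lin s t f \<Longrightarrow> f 0 = 0"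
  by (metis add_cancel_right_right lin_add)

lemma lin_diff: "lin s t f \<Longrightarrow> f (x - y) = f x - f y"
  by (metis eq_diff_eq lin_add)

lemma lin_sum_list: "lin s t f \<Longrightarrow> f (\<Sum>(u, v)\<leftarrow>xs. g u v) = (\<Sum>(u, v)\<leftarrow>xs. f (g u v))"
  by (induction xs) (auto simp: lin_zero lin_add)

lemma lin_id: "lin s s (\<lambda>x. x)"
  by (simp add: lin_def)

lemma lin_compose: "lin t r f \<Longrightarrow> lin s t g \<Longrightarrow> lin s r (\<lambda>x. f (g x))"
  by (simp add: lin_def)

lemma vector_space_module: "vector_space t \<Longrightarrow> module t"
  by (simp add: module_iff_vector_space)

lemma lin_scalar_mult: "vector_space t \<Longrightarrow> lin t t (t c)"
  by (simp add: lin_def vector_space_module module.scale_right_distrib module.scale_left_commute)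

lemma scale_sum_list:
  fixes t :: "complex \<Rightarrow> 'v::ab_group_add \<Rightarrow> 'v"
  shows "vector_space t \<Longrightarrow> t c (\<Sum>(u, v)\<leftarrow>xs. g u v) = (\<Sum>(u, v)\<leftarrow>xs. t c (g u v))"
  by (rule lin_sum_list[OF lin_scalar_mult[of t c]])

lemma lin_scale_left: "vector_space t \<Longrightarrow> lin s (*) g \<Longrightarrow> lin s t (\<lambda>x. t (g x) y)"
  by (simp add: lin_def vector_space_module module.scale_left_distrib module.scale_scale)

lemma lin_scale_right: "vector_space t \<Longrightarrow> lin s t g \<Longrightarrow> lin s t (\<lambda>x. t c (g x))"
  by (rule lin_compose[OF lin_scalar_mult])

lemma lin_sum_list_fun:
  assumes "vector_space t" and "\<And>u v. lin s t (\<lambda>x. f x u v)"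
  shows "lin s t (\<lambda>x. \<Sum>(u, v)\<leftarrow>ys. f x u v)"
proof (induction ys)
  case Nil
  then show ?case by (simp add: lin_def vector_space_module[OF assms(1)] module.scale_zero_right)
next
  case (Cons a ys)
  with assms show ?case
    by (cases a) (auto simp: lin_def vector_space_module module.scale_right_distrib algebra_simps)
qed

lemma cplx_algebra_scale_mult:
  "cplx_algebra s \<Longrightarrow> s c x * y = s c (x * y)" "cplx_algebra s \<Longrightarrow> x * s c y = s c (x * y)"
  unfolding cplx_algebra_def by metis+

lemma lin_mult_left: "cplx_algebra s \<Longrightarrow> lin r s g \<Longrightarrow> lin r s (\<lambda>x. g x * y)"
  and lin_mult_right: "cplx_algebra s \<Longrightarrow> lin r s g \<Longrightarrow> lin r s (\<lambda>x. y * g x)"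
  by (simp_all add: lin_def cplx_algebra_scale_mult distrib_left distrib_right)

lemma vector_space_complex: "vector_space ((*) :: complex \<Rightarrow> complex \<Rightarrow> complex)"
  by unfold_locales (auto simp: algebra_simps)

lemma sum_list_pairs_add:
  "(\<Sum>(u, v)\<leftarrow>xs. f u v + g u v) = (\<Sum>(u, v)\<leftarrow>xs. f u v) + (\<Sum>(u, v)\<leftarrow>xs. g u v :: 'a::comm_monoid_add)"
  by (induction xs) (auto simp: add_ac)

lemma sum_list_pairs_zero: "(\<Sum>(u, v)\<leftarrow>xs. 0) = (0::'a::comm_monoid_add)"
  by (induction xs) auto

lemma sum_list_pairs_swap:
  "(\<Sum>(u, v)\<leftarrow>xs. \<Sum>(p, q)\<leftarrow>ys. f u v p q) = (\<Sum>(p, q)\<leftarrow>ys. \<Sum>(u, v)\<leftarrow>xs. f u v p q :: 'a::comm_monoid_add)"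
  by (induction xs) (auto simp: sum_list_pairs_add sum_list_pairs_zero)

lemma sum_list_pairs_mult_right: "(\<Sum>(u, v)\<leftarrow>xs. f u v) * y = (\<Sum>(u, v)\<leftarrow>xs. f u v * y :: 'a::semiring_0)"
  by (induction xs) (auto simp: distrib_right)

lemma sum_list_pairs_mult_left: "y * (\<Sum>(u, v)\<leftarrow>xs. f u v) = (\<Sum>(u, v)\<leftarrow>xs. y * f u v :: 'a::semiring_0)"
  by (induction xs) (auto simp: distrib_left)

lemma sum_list_map_fst: "(\<Sum>(u, v)\<leftarrow>map (\<lambda>(u, v). (g u, v)) xs. \<beta> u v) = (\<Sum>(u, v)\<leftarrow>xs. \<beta> (g u) v)"
  by (induction xs) auto

lemma sum_list_product:
  "(\<Sum>(x, y)\<leftarrow>[(f u u', g v v'). (u, v)\<leftarrow>xs, (u', v')\<leftarrow>ys]. \<beta> x y) =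
   (\<Sum>(u, v)\<leftarrow>xs. \<Sum>(u', v')\<leftarrow>ys. \<beta> (f u u') (g v v') :: 'a::comm_monoid_add)"
proof (induction xs)
  case (Cons a xs)
  have "(\<Sum>(x, y)\<leftarrow>[(f (fst a) u', g (snd a) v'). (u', v')\<leftarrow>ys]. \<beta> x y) =
      (\<Sum>(u', v')\<leftarrow>ys. \<beta> (f (fst a) u') (g (snd a) v'))"
    by (induction ys) auto
  with Cons show ?case by (cases a) simp
qed simp

lemma eq_if_functionals_eq:
  assumes vs: "vector_space s" and eq: "\<And>l. lin s (*) l \<Longrightarrow> l x = l y"
  shows "x = y"
proof (rule ccontr)
  assume "x \<noteq> y"
  interpret vp: vector_space_pair s "(*) :: complex \<Rightarrow> complex \<Rightarrow> complex"
    by (intro vector_space_pair.intro vs vector_space_complex)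
  have "vp.vs1.independent {x - y}"
    using \<open>x \<noteq> y\<close> by (simp add: vp.vs1.independent_insert)
  then obtain l where l: "Vector_Spaces.linear s (*) l" and "l (x - y) = 1"
    using vp.linear_independent_extend[of "{x - y}" "\<lambda>_. 1"] by auto
  moreover have "lin s (*) l"
    using l by (simp add: Vector_Spaces.linear_iff lin_def)
  ultimately show False
    using eq[of l] lin_diff[of s "(*)" l x y] by simp
qed

lemma tens_eq_imp_sum_eq:
  assumes eq: "tens sU sV xs = tens sU sV ys"
    and vs: "vector_space sU" "vector_space sV" "vector_space sW"
    and \<beta>: "bilin sU sV sW \<beta>"
  shows "(\<Sum>(u, v)\<leftarrow>xs. \<beta> u v) = (\<Sum>(u, v)\<leftarrow>ys. \<beta> u v)"
proof (rule eq_if_functionals_eq[OF vs(3)])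
  fix l assume l: "lin sW (*) l"
  have "bilin_form sU sV (\<lambda>u v. l (\<beta> u v))"
    using lin_compose[OF l bilin_linD(1)[OF \<beta>]] lin_compose[OF l bilin_linD(2)[OF \<beta>]]
      vs vector_space_complex
    by (simp add: bilin_form_def Vector_Spaces.linear_iff lin_def)
  then have "(\<Sum>(u, v)\<leftarrow>xs. l (\<beta> u v)) = (\<Sum>(u, v)\<leftarrow>ys. l (\<beta> u v))"
    using fun_cong[OF eq, of "\<lambda>u v. l (\<beta> u v)"] by (simp add: tens_def)
  then show "l (\<Sum>(u, v)\<leftarrow>xs. \<beta> u v) = l (\<Sum>(u, v)\<leftarrow>ys. \<beta> u v)"
    by (simp add: lin_sum_list[OF l])
qed

text \<open>\<open>sweedler \<Delta> n a F\<close> is the Sweedler sum of \<open>F [a\<^sub>1, \<dots>, a\<^sub>n\<^sub>+\<^sub>1]\<close>, always splitting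
  the last tensor factor.\<close>

primrec sweedler :: "('a \<Rightarrow> ('a \<times> 'a) list) \<Rightarrow> nat \<Rightarrow> 'a \<Rightarrow> ('a list \<Rightarrow> 'v::ab_group_add) \<Rightarrow> 'v" where
  "sweedler D 0 a F = F [a]"
| "sweedler D (Suc n) a F = (\<Sum>(u, v)\<leftarrow>D a. sweedler D n v (\<lambda>vs. F (u # vs)))"

primrec multilin :: "(complex \<Rightarrow> 'a::ab_group_add \<Rightarrow> 'a) \<Rightarrow> (complex \<Rightarrow> 'v::ab_group_add \<Rightarrow> 'v)
    \<Rightarrow> nat \<Rightarrow> ('a list \<Rightarrow> 'v) \<Rightarrow> bool" where
  "multilin s t 0 F \<longleftrightarrow> lin s t (\<lambda>x. F [x])"
| "multilin s t (Suc n) F \<longleftrightarrow>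
     (\<forall>vs. length vs = Suc n \<longrightarrow> lin s t (\<lambda>x. F (x # vs))) \<and> (\<forall>u. multilin s t n (\<lambda>vs. F (u # vs)))"

lemma sweedler_add: "sweedler D n a (\<lambda>t. F t + G t) = sweedler D n a F + sweedler D n a G"
  by (induction n arbitrary: a F G) (auto simp: sum_list_pairs_add)

lemma sweedler_zero: "sweedler D n a (\<lambda>t. 0) = 0"
  by (induction n arbitrary: a) (auto simp: sum_list_pairs_zero)

lemma sweedler_sum_list:
  "sweedler D n a (\<lambda>t. \<Sum>(p, q)\<leftarrow>ys. G p q t) = (\<Sum>(p, q)\<leftarrow>ys. sweedler D n a (G p q))"
  by (induction ys) (auto simp: sweedler_add sweedler_zero)

lemma sweedler_cong: "(\<And>t. length t = Suc n \<Longrightarrow> F t = G t) \<Longrightarrow> sweedler D n a F = sweedler D n a G"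
proof (induction n arbitrary: a F G)
  case (Suc n)
  show ?case
    unfolding sweedler.simps
    by (intro arg_cong[where f=sum_list] map_cong refl) (auto intro!: Suc.IH Suc.prems)
qed simp

lemma sweedler_lin_map: "lin s t f \<Longrightarrow> sweedler D n a (\<lambda>vs. f (G vs)) = f (sweedler D n a G)"
  by (induction n arbitrary: a G) (simp_all add: lin_sum_list)

lemma lin_sweedler_param:
  assumes "vector_space t" and "\<And>vs. length vs = Suc n \<Longrightarrow> lin s t (\<lambda>x. G x vs)"
  shows "lin s t (\<lambda>x. sweedler D n a (G x))"
  using assms(2)
proof (induction n arbitrary: a G)
  case (Suc n)
  then show ?case
    by (simp, intro lin_sum_list_fun[OF assms(1)] Suc.IH Suc.prems) simp
qed simp

section \<open>Hopf algebras\<close>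

locale hopf =
  fixes sA :: "complex \<Rightarrow> 'a::ring_1 \<Rightarrow> 'a"
    and \<Delta> :: "'a \<Rightarrow> ('a \<times> 'a) list"
    and \<epsilon> :: "'a \<Rightarrow> complex"
    and S :: "'a \<Rightarrow> 'a"
  assumes hopf: "hopf_algebra sA \<Delta> \<epsilon> S"
begin

lemma cplx_algebra_A: "cplx_algebra sA"
  and vector_space_A: "vector_space sA"
  using hopf unfolding hopf_algebra_def cplx_algebra_def by blast+

lemma coproduct_add: "tens sA sA (\<Delta> (a + b)) = tens sA sA (\<Delta> a @ \<Delta> b)"
  and coproduct_scale: "tens sA sA (\<Delta> (sA c a)) = tens sA sA (map (\<lambda>(u, v). (sA c u, v)) (\<Delta> a))"
  and coproduct_mult:
    "tens sA sA (\<Delta> (a * b)) = tens sA sA [(u * u', v * v'). (u, v) \<leftarrow> \<Delta> a, (u', v') \<leftarrow> \<Delta> b]"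
  and coproduct_one: "tens sA sA (\<Delta> 1) = tens sA sA [(1, 1)]"
  and coassoc_form: "trilin_form sA \<phi> \<Longrightarrow>
    (\<Sum>(u, v)\<leftarrow>\<Delta> a. \<Sum>(u1, u2)\<leftarrow>\<Delta> u. \<phi> u1 u2 v) = (\<Sum>(u, v)\<leftarrow>\<Delta> a. \<Sum>(v1, v2)\<leftarrow>\<Delta> v. \<phi> u v1 v2)"
  and counit_mult: "\<epsilon> (a * b) = \<epsilon> a * \<epsilon> b"
  and counit_one: "\<epsilon> 1 = 1"
  and counit_left: "(\<Sum>(u, v)\<leftarrow>\<Delta> a. sA (\<epsilon> u) v) = a"
  and counit_right: "(\<Sum>(u, v)\<leftarrow>\<Delta> a. sA (\<epsilon> v) u) = a"
  and antipode_left: "(\<Sum>(u, v)\<leftarrow>\<Delta> a. S u * v) = sA (\<epsilon> a) 1"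
  and antipode_right: "(\<Sum>(u, v)\<leftarrow>\<Delta> a. u * S v) = sA (\<epsilon> a) 1"
  using hopf by (simp_all add: hopf_algebra_def)

lemma counit_lin: "lin sA (*) \<epsilon>"
  and antipode_lin: "lin sA sA S"
  using hopf by (simp_all add: hopf_algebra_def Vector_Spaces.linear_iff lin_def)

lemmas lin_S = lin_compose[OF antipode_lin]
lemmas lin_counit = lin_compose[OF counit_lin]

lemmas lin_A_intros = lin_id lin_mult_left[OF cplx_algebra_A] lin_mult_right[OF cplx_algebra_A]
  lin_S lin_counit lin_scale_left[OF vector_space_A] lin_scale_right[OF vector_space_A]

lemma sum_coproduct_eq:
  "tens sA sA xs = tens sA sA ys \<Longrightarrow> vector_space t \<Longrightarrow> bilin sA sA t \<beta> \<Longrightarrow>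
    (\<Sum>(u, v)\<leftarrow>xs. \<beta> u v) = (\<Sum>(u, v)\<leftarrow>ys. \<beta> u v)"
  using tens_eq_imp_sum_eq vector_space_A by blast

lemma lin_sum_coproduct:
  assumes t: "vector_space t" and \<beta>: "bilin sA sA t \<beta>"
  shows "lin sA t (\<lambda>a. \<Sum>(u, v)\<leftarrow>\<Delta> a. \<beta> u v)"
  unfolding lin_def
proof (intro conjI allI)
  fix a b
  show "(\<Sum>(u, v)\<leftarrow>\<Delta> (a + b). \<beta> u v) = (\<Sum>(u, v)\<leftarrow>\<Delta> a. \<beta> u v) + (\<Sum>(u, v)\<leftarrow>\<Delta> b. \<beta> u v)"
    using sum_coproduct_eq[OF coproduct_add t \<beta>] by simp
next
  fix c a
  have "(\<Sum>(u, v)\<leftarrow>\<Delta> (sA c a). \<beta> u v) = (\<Sum>(u, v)\<leftarrow>map (\<lambda>(u, v). (sA c u, v)) (\<Delta> a). \<beta> u v)"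
    by (rule sum_coproduct_eq[OF coproduct_scale t \<beta>])
  also have "\<dots> = (\<Sum>(u, v)\<leftarrow>\<Delta> a. \<beta> (sA c u) v)"
    by (rule sum_list_map_fst)
  also have "\<dots> = t c (\<Sum>(u, v)\<leftarrow>\<Delta> a. \<beta> u v)"
    using \<beta> by (simp add: bilin_def lin_def scale_sum_list[OF t])
  finally show "(\<Sum>(u, v)\<leftarrow>\<Delta> (sA c a). \<beta> u v) = t c (\<Sum>(u, v)\<leftarrow>\<Delta> a. \<beta> u v)" .
qed

lemmas lin_sum_coproduct_compose = lin_compose[OF lin_sum_coproduct]

lemma sum_coproduct_mult:
  "vector_space t \<Longrightarrow> bilin sA sA t \<beta> \<Longrightarrow>
    (\<Sum>(u, v)\<leftarrow>\<Delta> (a * b). \<beta> u v) = (\<Sum>(u, v)\<leftarrow>\<Delta> a. \<Sum>(u', v')\<leftarrow>\<Delta> b. \<beta> (u * u') (v * v'))"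
  using sum_coproduct_eq[OF coproduct_mult] by (simp add: sum_list_product)

lemma sum_coproduct_one: "vector_space t \<Longrightarrow> bilin sA sA t \<beta> \<Longrightarrow> (\<Sum>(u, v)\<leftarrow>\<Delta> 1. \<beta> u v) = \<beta> 1 1"
  using sum_coproduct_eq[OF coproduct_one] by simp

lemma coassoc:
  assumes t: "vector_space t"
    and "\<And>y z. lin sA t (\<lambda>x. H x y z)" "\<And>x z. lin sA t (\<lambda>y. H x y z)" "\<And>x y. lin sA t (\<lambda>z. H x y z)"
  shows "(\<Sum>(u, v)\<leftarrow>\<Delta> a. \<Sum>(u1, u2)\<leftarrow>\<Delta> u. H u1 u2 v) = (\<Sum>(u, v)\<leftarrow>\<Delta> a. \<Sum>(v1, v2)\<leftarrow>\<Delta> v. H u v1 v2)"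
proof (rule eq_if_functionals_eq[OF t])
  fix l assume l: "lin t (*) l"
  have "trilin_form sA (\<lambda>x y z. l (H x y z))"
    using lin_compose[OF l assms(2)] lin_compose[OF l assms(3)] lin_compose[OF l assms(4)]
      vector_space_A vector_space_complex
    by (simp add: trilin_form_def Vector_Spaces.linear_iff lin_def)
  then show "l (\<Sum>(u, v)\<leftarrow>\<Delta> a. \<Sum>(u1, u2)\<leftarrow>\<Delta> u. H u1 u2 v) = l (\<Sum>(u, v)\<leftarrow>\<Delta> a. \<Sum>(v1, v2)\<leftarrow>\<Delta> v. H u v1 v2)"
    by (simp add: lin_sum_list[OF l] coassoc_form)
qed

lemma counit_left_apply: "lin sA t f \<Longrightarrow> (\<Sum>(u, v)\<leftarrow>\<Delta> a. t (\<epsilon> u) (f v)) = f a"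
  using lin_sum_list[of sA t f "\<lambda>u v. sA (\<epsilon> u) v" "\<Delta> a"] counit_left[of a] by (simp add: lin_def)

lemma counit_right_apply: "lin sA t f \<Longrightarrow> (\<Sum>(u, v)\<leftarrow>\<Delta> a. t (\<epsilon> v) (f u)) = f a"
  using lin_sum_list[of sA t f "\<lambda>u v. sA (\<epsilon> v) u" "\<Delta> a"] counit_right[of a] by (simp add: lin_def)

lemma antipode_left_apply: "lin sA t f \<Longrightarrow> (\<Sum>(u, v)\<leftarrow>\<Delta> a. f (S u * v)) = t (\<epsilon> a) (f 1)"
  using lin_sum_list[of sA t f "\<lambda>u v. S u * v" "\<Delta> a"] antipode_left[of a] by (simp add: lin_def)

lemma antipode_right_apply: "lin sA t f \<Longrightarrow> (\<Sum>(u, v)\<leftarrow>\<Delta> a. f (u * S v)) = t (\<epsilon> a) (f 1)"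
  using lin_sum_list[of sA t f "\<lambda>u v. u * S v" "\<Delta> a"] antipode_right[of a] by (simp add: lin_def)

lemma lin_sweedler:
  assumes t: "vector_space t"
  shows "multilin sA t n F \<Longrightarrow> lin sA t (\<lambda>a. sweedler \<Delta> n a F)"
proof (induction n arbitrary: F)
  case (Suc n)
  then show ?case
    by (simp, intro lin_sum_coproduct[OF t] bilinI lin_sweedler_param[OF t] Suc.IH) auto
qed simp

text \<open>Coassociativity: splitting any tensor factor of an iterated coproduct gives the same sum.\<close>

lemma sweedler_split_take_drop:
  assumes t: "vector_space t"
  shows "multilin sA t (Suc n) F \<Longrightarrow> k \<le> n \<Longrightarrow>
    sweedler \<Delta> n a (\<lambda>vs. \<Sum>(p, q)\<leftarrow>\<Delta> (vs ! k). F (take k vs @ p # q # drop (Suc k) vs)) =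
    sweedler \<Delta> (Suc n) a F"
proof (induction n arbitrary: a k F)
  case (Suc m)
  show ?case
  proof (cases k)
    case 0
    have F1: "lin sA t (\<lambda>x. F (x # vs))" if "length vs = Suc (Suc m)" for vs
      using Suc.prems(1) that by simp
    have F2: "lin sA t (\<lambda>y. F (x # y # vs))" if "length vs = Suc m" for x vs
      using Suc.prems(1) that by simp
    have F3: "multilin sA t m (\<lambda>vs. F (x # y # vs))" for x y
      using Suc.prems(1) by simp
    have "sweedler \<Delta> (Suc m) a (\<lambda>vs. \<Sum>(p, q)\<leftarrow>\<Delta> (vs ! k). F (take k vs @ p # q # drop (Suc k) vs))
        = (\<Sum>(u, v)\<leftarrow>\<Delta> a. \<Sum>(p, q)\<leftarrow>\<Delta> u. sweedler \<Delta> m v (\<lambda>vs. F (p # q # vs)))"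
      using 0 by (simp add: sweedler_sum_list)
    also have "\<dots> = (\<Sum>(u, v)\<leftarrow>\<Delta> a. \<Sum>(v1, v2)\<leftarrow>\<Delta> v. sweedler \<Delta> m v2 (\<lambda>vs. F (u # v1 # vs)))"
    proof (rule coassoc[OF t])
      show "lin sA t (\<lambda>x. sweedler \<Delta> m z (\<lambda>vs. F (x # y # vs)))" for y z
        by (rule lin_sweedler_param[OF t]) (simp add: F1)
      show "lin sA t (\<lambda>y. sweedler \<Delta> m z (\<lambda>vs. F (x # y # vs)))" for x z
        by (rule lin_sweedler_param[OF t]) (simp add: F2)
      show "lin sA t (\<lambda>z. sweedler \<Delta> m z (\<lambda>vs. F (x # y # vs)))" for x y
        by (rule lin_sweedler[OF t F3])
    qed
    also have "\<dots> = sweedler \<Delta> (Suc (Suc m)) a F"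
      by simp
    finally show ?thesis .
  next
    case (Suc k')
    have "sweedler \<Delta> m v (\<lambda>vs. \<Sum>(p, q)\<leftarrow>\<Delta> (vs ! k'). F (u # take k' vs @ p # q # drop (Suc k') vs))
        = sweedler \<Delta> (Suc m) v (\<lambda>vs. F (u # vs))" for u v
      using Suc.IH[of "\<lambda>vs. F (u # vs)" k' v] Suc.prems Suc by simp
    then show ?thesis
      using Suc by simp
  qed
qed simp

lemma sweedler_split:
  assumes "vector_space t" and "m = Suc n" and "multilin sA t m F" and "k \<le> n"
    and "\<And>vs. length vs = Suc n \<Longrightarrow>
      G vs = (\<Sum>(p, q)\<leftarrow>\<Delta> (vs ! k). F (take k vs @ p # q # drop (Suc k) vs))"
  shows "sweedler \<Delta> n a G = sweedler \<Delta> m a F"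
proof -
  have "sweedler \<Delta> n a G
      = sweedler \<Delta> n a (\<lambda>vs. \<Sum>(p, q)\<leftarrow>\<Delta> (vs ! k). F (take k vs @ p # q # drop (Suc k) vs))"
    by (rule sweedler_cong) (rule assms(5))
  also have "\<dots> = sweedler \<Delta> (Suc n) a F"
    by (rule sweedler_split_take_drop[OF assms(1)]) (use assms(2-4) in simp_all)
  finally show ?thesis
    using assms(2) by simp
qed

lemma antipode_one: "S 1 = 1"
proof -
  have "(\<Sum>(u, v)\<leftarrow>\<Delta> 1. S u * v) = S 1 * 1"
    by (rule sum_coproduct_one[OF vector_space_A], rule bilinI, auto intro!: lin_A_intros)
  then show ?thesis
    using antipode_left[of 1]
    by (simp add: counit_one module.scale_one[OF vector_space_module[OF vector_space_A]])
qed

text \<open>Both \<open>S \<circ> m\<close> and \<open>m\<^sup>o\<^sup>p \<circ> (S \<otimes> S)\<close> are convolution inverses of the multiplication \<open>m\<close>;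
  the two lemmas evaluate \<open>\<Sum> S(a\<^sub>1b\<^sub>1) a\<^sub>2b\<^sub>2 S(b\<^sub>3) S(a\<^sub>3)\<close> by contracting from the right and from
  the left.\<close>

lemma sandwich_eq_antipode_of_mult:
  "sweedler \<Delta> 2 a (\<lambda>s. sweedler \<Delta> 2 b (\<lambda>t. S (s!0 * t!0) * (s!1 * t!1) * S (t!2) * S (s!2))) = S (a * b)"
proof -
  have inner: "sweedler \<Delta> 2 b (\<lambda>t. S (s!0 * t!0) * (s!1 * t!1) * S (t!2) * S (s!2))
      = S (s!0 * b) * s!1 * S (s!2)" for s
  proof -
    have "sweedler \<Delta> 2 b (\<lambda>t. S (s!0 * t!0) * (s!1 * t!1) * S (t!2) * S (s!2))
        = (\<Sum>(u, v)\<leftarrow>\<Delta> b. \<Sum>(p, q)\<leftarrow>\<Delta> v. (S (s!0 * u) * s!1) * (p * S q) * S (s!2))"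
      by (simp add: numeral_eq_Suc mult.assoc)
    also have "\<dots> = (\<Sum>(u, v)\<leftarrow>\<Delta> b. sA (\<epsilon> v) (S (s!0 * u) * s!1 * S (s!2)))"
      by (subst antipode_right_apply[where f="\<lambda>z. (S (s!0 * _) * s!1) * z * S (s!2)"])
        (auto intro!: lin_A_intros)
    also have "\<dots> = S (s!0 * b) * s!1 * S (s!2)"
      by (rule counit_right_apply[where f="\<lambda>z. S (s!0 * z) * s!1 * S (s!2)"]) (auto intro!: lin_A_intros)
    finally show ?thesis .
  qed
  have "sweedler \<Delta> 2 a (\<lambda>s. S (s!0 * b) * s!1 * S (s!2))
      = (\<Sum>(u, v)\<leftarrow>\<Delta> a. \<Sum>(p, q)\<leftarrow>\<Delta> v. S (u * b) * (p * S q))"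
    by (simp add: numeral_eq_Suc mult.assoc)
  also have "\<dots> = (\<Sum>(u, v)\<leftarrow>\<Delta> a. sA (\<epsilon> v) (S (u * b)))"
    by (subst antipode_right_apply[where f="\<lambda>z. S (_ * b) * z"]) (auto intro!: lin_A_intros)
  also have "\<dots> = S (a * b)"
    by (rule counit_right_apply[where f="\<lambda>z. S (z * b)"]) (auto intro!: lin_A_intros)
  finally show ?thesis
    by (simp only: inner)
qed

lemma sandwich_eq_mult_of_antipodes:
  "sweedler \<Delta> 2 a (\<lambda>s. sweedler \<Delta> 2 b (\<lambda>t. S (s!0 * t!0) * (s!1 * t!1) * S (t!2) * S (s!2))) = S b * S a"
proof -
  define K where "K s t = S (s!0 * t!0) * (s!1 * t!1) * S (t!2) * S (s!2)" for s t :: "'a list"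
  have split_b: "sweedler \<Delta> 2 b (K s) = (\<Sum>(t0, t1)\<leftarrow>\<Delta> b. \<Sum>(p, q)\<leftarrow>\<Delta> t0. K s [p, q, t1])" for s
  proof -
    have "sweedler \<Delta> 1 b (\<lambda>t. \<Sum>(p, q)\<leftarrow>\<Delta> (t!0). K s [p, q, t!1]) = sweedler \<Delta> 2 b (K s)"
      by (rule sweedler_split[OF vector_space_A, where k=0])
        (auto simp: K_def numeral_eq_Suc length_Suc_conv intro!: lin_A_intros)
    then show ?thesis
      by (simp add: numeral_eq_Suc)
  qed
  have "sweedler \<Delta> 1 a (\<lambda>s. \<Sum>(p', q')\<leftarrow>\<Delta> (s!0). \<Sum>(t0, t1)\<leftarrow>\<Delta> b. \<Sum>(p, q)\<leftarrow>\<Delta> t0. K [p', q', s!1] [p, q, t1])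
      = sweedler \<Delta> 2 a (\<lambda>s. \<Sum>(t0, t1)\<leftarrow>\<Delta> b. \<Sum>(p, q)\<leftarrow>\<Delta> t0. K s [p, q, t1])"
    by (rule sweedler_split[OF vector_space_A, where k=0])
      (auto simp: K_def numeral_eq_Suc length_Suc_conv intro!: lin_A_intros lin_sum_list_fun[OF vector_space_A])
  then have "sweedler \<Delta> 2 a (\<lambda>s. sweedler \<Delta> 2 b (K s))
      = (\<Sum>(u, v)\<leftarrow>\<Delta> a. \<Sum>(t0, t1)\<leftarrow>\<Delta> b. \<Sum>(p', q')\<leftarrow>\<Delta> u. \<Sum>(p, q)\<leftarrow>\<Delta> t0. S (p' * p) * (q' * q) * (S t1 * S v))"
    by (simp add: split_b K_def sum_list_pairs_swap[where ys="\<Delta> b"] mult.assoc)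
  also have "\<dots> = (\<Sum>(u, v)\<leftarrow>\<Delta> a. \<Sum>(t0, t1)\<leftarrow>\<Delta> b. \<Sum>(c1, c2)\<leftarrow>\<Delta> (u * t0). S c1 * c2 * (S t1 * S v))"
    by (subst sum_coproduct_mult[OF vector_space_A]) (auto intro!: bilinI lin_A_intros)
  also have "\<dots> = (\<Sum>(u, v)\<leftarrow>\<Delta> a. \<Sum>(t0, t1)\<leftarrow>\<Delta> b. sA (\<epsilon> u) (sA (\<epsilon> t0) (S t1 * S v)))"
    by (subst antipode_left_apply[where f="\<lambda>z. z * (S _ * S _)"])
      (auto intro!: lin_A_intros simp: counit_mult mult.commute
        module.scale_scale[OF vector_space_module[OF vector_space_A]])
  also have "\<dots> = (\<Sum>(u, v)\<leftarrow>\<Delta> a. sA (\<epsilon> u) (S b * S v))"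
    by (simp add: scale_sum_list[OF vector_space_A, symmetric]
        counit_left_apply[where f="\<lambda>z. S z * S _", OF lin_A_intros(2)[OF lin_S[OF lin_id]]])
  also have "\<dots> = S b * S a"
    by (rule counit_left_apply[where f="\<lambda>z. S b * S z"]) (auto intro!: lin_A_intros)
  finally show ?thesis
    unfolding K_def[abs_def] .
qed

lemma antipode_mult: "S (a * b) = S b * S a"
  using sandwich_eq_antipode_of_mult sandwich_eq_mult_of_antipodes by simp

lemma sweedler_conjugate_antipode:
  assumes t: "vector_space t" and b: "bilin sA sA t \<beta>"
  shows "sweedler \<Delta> 3 c (\<lambda>vs. \<beta> (p * vs!0 * S (vs!3)) (q * vs!1 * S (vs!2))) = t (\<epsilon> c) (\<beta> p q)"
proof -
  note lin_intros = lin_A_intros lin_bilin_left[OF b] lin_bilin_right[OF b]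
  have "sweedler \<Delta> 3 c (\<lambda>vs. \<beta> (p * vs!0 * S (vs!3)) (q * vs!1 * S (vs!2)))
      = sweedler \<Delta> 2 c (\<lambda>vs. \<Sum>(x, y)\<leftarrow>\<Delta> (vs!1). \<beta> (p * vs!0 * S (vs!2)) (q * (x * S y)))"
    by (rule sweedler_split[OF t, where k=1, symmetric])
      (auto simp: numeral_eq_Suc length_Suc_conv mult.assoc intro!: lin_intros)
  also have "\<dots> = sweedler \<Delta> 2 c (\<lambda>vs. t (\<epsilon> (vs!1)) (\<beta> (p * vs!0 * S (vs!2)) q))"
    by (rule sweedler_cong) (subst antipode_right_apply, auto intro!: lin_intros)
  also have "\<dots> = (\<Sum>(u, v)\<leftarrow>\<Delta> c. \<Sum>(x, y)\<leftarrow>\<Delta> v. t (\<epsilon> x) (\<beta> (p * u * S y) q))"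
    by (simp add: numeral_eq_Suc)
  also have "\<dots> = (\<Sum>(u, v)\<leftarrow>\<Delta> c. \<beta> (p * (u * S v)) q)"
    by (subst counit_left_apply) (auto intro!: lin_intros simp: mult.assoc)
  also have "\<dots> = t (\<epsilon> c) (\<beta> p q)"
    by (subst antipode_right_apply) (auto intro!: lin_intros)
  finally show ?thesis .
qed

lemma sum_coproduct_antipode_left_mult:
  assumes t: "vector_space t" and b: "bilin sA sA t \<beta>"
  shows "(\<Sum>(x, y)\<leftarrow>\<Delta> c. \<Sum>(c1, c2)\<leftarrow>\<Delta> (S x * y). \<beta> (c1 * p) (c2 * q)) = t (\<epsilon> c) (\<beta> p q)"
proof -
  note lin_intros = lin_sum_coproduct_compose[OF t] bilinI lin_A_intros lin_bilin_left[OF b] lin_bilin_right[OF b]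
  have "(\<Sum>(x, y)\<leftarrow>\<Delta> c. \<Sum>(c1, c2)\<leftarrow>\<Delta> (S x * y). \<beta> (c1 * p) (c2 * q))
      = t (\<epsilon> c) (\<Sum>(c1, c2)\<leftarrow>\<Delta> 1. \<beta> (c1 * p) (c2 * q))"
    by (rule antipode_left_apply[where f="\<lambda>z. \<Sum>(c1, c2)\<leftarrow>\<Delta> z. \<beta> (c1 * p) (c2 * q)"]) (intro lin_intros)+
  also have "\<dots> = t (\<epsilon> c) (\<beta> p q)"
    by (subst sum_coproduct_one[OF t]) (auto intro!: lin_intros)
  finally show ?thesis .
qed

lemma sum_coproduct_antipode:
  assumes t: "vector_space t" and b: "bilin sA sA t \<beta>"
  shows "(\<Sum>(p, q)\<leftarrow>\<Delta> (S a). \<beta> p q) = (\<Sum>(u, v)\<leftarrow>\<Delta> a. \<beta> (S v) (S u))"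
proof -
  note lin_intros = lin_sum_coproduct_compose[OF t] bilinI lin_sum_list_fun[OF t]
    lin_A_intros lin_bilin_left[OF b] lin_bilin_right[OF b]
  have "(\<Sum>(p, q)\<leftarrow>\<Delta> (S a). \<beta> p q) = (\<Sum>(a1, a2)\<leftarrow>\<Delta> a. t (\<epsilon> a2) (\<Sum>(p, q)\<leftarrow>\<Delta> (S a1). \<beta> p q))"
    by (rule counit_right_apply[symmetric]) (intro lin_intros)
  also have "\<dots> = (\<Sum>(a1, a2)\<leftarrow>\<Delta> a. \<Sum>(p, q)\<leftarrow>\<Delta> (S a1).
      sweedler \<Delta> 3 a2 (\<lambda>vs. \<beta> (p * vs!0 * S (vs!3)) (q * vs!1 * S (vs!2))))"
    by (simp only: scale_sum_list[OF t] sweedler_conjugate_antipode[OF t b])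
  also have "\<dots> = sweedler \<Delta> 4 a (\<lambda>vs. \<Sum>(p, q)\<leftarrow>\<Delta> (S (vs!0)). \<beta> (p * vs!1 * S (vs!4)) (q * vs!2 * S (vs!3)))"
    by (simp add: numeral_eq_Suc sweedler_sum_list)
  also have "\<dots> = sweedler \<Delta> 3 a (\<lambda>vs. \<Sum>(y1, y2)\<leftarrow>\<Delta> (vs!1). \<Sum>(p, q)\<leftarrow>\<Delta> (S (vs!0)).
      \<beta> (p * y1 * S (vs!3)) (q * y2 * S (vs!2)))"
  proof (rule sweedler_split[OF t, where k=1, symmetric])
    show "multilin sA t 4 (\<lambda>vs. \<Sum>(p, q)\<leftarrow>\<Delta> (S (vs!0)). \<beta> (p * vs!1 * S (vs!4)) (q * vs!2 * S (vs!3)))"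
      by (simp add: numeral_eq_Suc) (intro conjI allI impI lin_intros)
  qed (auto simp: numeral_eq_Suc length_Suc_conv)
  also have "\<dots> = sweedler \<Delta> 3 a (\<lambda>vs. \<Sum>(c1, c2)\<leftarrow>\<Delta> (S (vs!0) * vs!1). \<beta> (c1 * S (vs!3)) (c2 * S (vs!2)))"
    by (rule sweedler_cong, subst sum_coproduct_mult[OF t])
      (auto intro!: lin_intros simp: sum_list_pairs_swap[where xs="\<Delta> (S _)"])
  also have "\<dots> = sweedler \<Delta> 2 a (\<lambda>vs. \<Sum>(x, y)\<leftarrow>\<Delta> (vs!0). \<Sum>(c1, c2)\<leftarrow>\<Delta> (S x * y).
      \<beta> (c1 * S (vs!2)) (c2 * S (vs!1)))"
  proof (rule sweedler_split[OF t, where k=0, symmetric])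
    show "multilin sA t 3 (\<lambda>vs. \<Sum>(c1, c2)\<leftarrow>\<Delta> (S (vs!0) * vs!1). \<beta> (c1 * S (vs!3)) (c2 * S (vs!2)))"
      by (simp add: numeral_eq_Suc) (intro conjI allI impI lin_intros)
  qed (auto simp: numeral_eq_Suc length_Suc_conv)
  also have "\<dots> = sweedler \<Delta> 2 a (\<lambda>vs. t (\<epsilon> (vs!0)) (\<beta> (S (vs!2)) (S (vs!1))))"
    by (rule sweedler_cong) (rule sum_coproduct_antipode_left_mult[OF t b])
  also have "\<dots> = (\<Sum>(u, r)\<leftarrow>\<Delta> a. t (\<epsilon> u) (\<Sum>(x, y)\<leftarrow>\<Delta> r. \<beta> (S y) (S x)))"
    by (simp add: numeral_eq_Suc scale_sum_list[OF t])
  also have "\<dots> = (\<Sum>(u, v)\<leftarrow>\<Delta> a. \<beta> (S v) (S u))"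
    by (rule counit_left_apply) (intro lin_intros)
  finally show ?thesis .
qed

end

locale hopf_bij = hopf +
  assumes bij_S: "bij S"
begin

lemma antipode_inv_antipode [simp]: "S (inv S x) = x" and inv_antipode_antipode [simp]: "inv S (S x) = x"
  using bij_S by (simp_all add: bij_is_surj surj_f_inv_f bij_is_inj)

lemma antipode_inj: "S x = S y \<Longrightarrow> x = y"
  by (metis inv_antipode_antipode)

lemma lin_inv_antipode: "lin sA sA (inv S)"
  unfolding lin_def
  by (intro conjI allI; rule antipode_inj) (simp_all add: lin_add[OF antipode_lin] lin_scale[OF antipode_lin])

lemmas lin_inv_S = lin_compose[OF lin_inv_antipode]

lemma inv_antipode_twisted: "(\<Sum>(u, v)\<leftarrow>\<Delta> a. v * inv S u) = sA (\<epsilon> a) 1"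
proof -
  have "S (\<Sum>(u, v)\<leftarrow>\<Delta> a. v * inv S u) = (\<Sum>(u, v)\<leftarrow>\<Delta> a. u * S v)"
    by (simp add: lin_sum_list[OF antipode_lin] antipode_mult)
  also have "\<dots> = S (sA (\<epsilon> a) 1)"
    by (simp add: antipode_right lin_scale[OF antipode_lin] antipode_one)
  finally show ?thesis
    by (rule antipode_inj)
qed

lemma inv_antipode_twisted_apply: "lin sA t f \<Longrightarrow> (\<Sum>(u, v)\<leftarrow>\<Delta> a. f (v * inv S u)) = t (\<epsilon> a) (f 1)"
  using lin_sum_list[of sA t f "\<lambda>u v. v * inv S u" "\<Delta> a"] inv_antipode_twisted[of a]
  by (simp add: lin_def)

end

section \<open>Module algebras and multipliers\<close>

locale cplx_alg =
  fixes sR :: "complex \<Rightarrow> 'r::ring \<Rightarrow> 'r"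
  assumes cplx_algebra_R: "cplx_algebra sR"
begin

lemma vector_space_R: "vector_space sR"
  using cplx_algebra_R by (simp add: cplx_algebra_def)

lemmas scale_mult_R = cplx_algebra_scale_mult[OF cplx_algebra_R]

end

locale hopf_tensor = hopf sA \<Delta> \<epsilon> S + cplx_alg sR
  for sA :: "complex \<Rightarrow> 'a::ring_1 \<Rightarrow> 'a" and \<Delta> \<epsilon> S and sR :: "complex \<Rightarrow> 'r::ring \<Rightarrow> 'r"

locale hopf_module_alg = hopf_tensor +
  fixes act :: "'a::ring_1 \<Rightarrow> 'r::ring \<Rightarrow> 'r"
  assumes module_alg: "module_algebra sA \<Delta> sR act"
begin

lemma act_assoc: "act (a * b) x = act a (act b x)"
  and act_one [simp]: "act 1 x = x"
  and act_prod: "act a (x * y) = (\<Sum>(u, v)\<leftarrow>\<Delta> a. act u x * act v y)"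
  using module_alg by (simp_all add: module_algebra_def)

lemma lin_act_coeff: "lin sA sR (\<lambda>a. act a x)"
  and lin_act: "lin sR sR (act a)"
  using module_alg by (simp_all add: module_algebra_def Vector_Spaces.linear_iff lin_def)

lemmas lin_R_intros = lin_A_intros lin_compose[OF lin_act_coeff] lin_compose[OF lin_act]
  lin_mult_left[OF cplx_algebra_R] lin_mult_right[OF cplx_algebra_R]
  lin_scale_left[OF vector_space_R] lin_scale_right[OF vector_space_R]

lemma act_times: "act a w * z = (\<Sum>(u, v)\<leftarrow>\<Delta> a. act u (w * act (S v) z))"
proof -
  have "(\<Sum>(u, v)\<leftarrow>\<Delta> a. act u (w * act (S v) z))
      = (\<Sum>(u, v)\<leftarrow>\<Delta> a. \<Sum>(p, q)\<leftarrow>\<Delta> u. act p w * act (q * S v) z)"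
    by (simp add: act_prod act_assoc)
  also have "\<dots> = (\<Sum>(u, r)\<leftarrow>\<Delta> a. \<Sum>(p, q)\<leftarrow>\<Delta> r. act u w * act (p * S q) z)"
    by (rule coassoc[OF vector_space_R]) (auto intro!: lin_R_intros)
  also have "\<dots> = (\<Sum>(u, r)\<leftarrow>\<Delta> a. sR (\<epsilon> r) (act u w * z))"
    by (subst antipode_right_apply[where f="\<lambda>y. act _ w * act y z"]) (auto intro!: lin_R_intros)
  also have "\<dots> = act a w * z"
    by (rule counit_right_apply) (auto intro!: lin_R_intros)
  finally show ?thesis
    by simp
qed

end

locale nondeg_alg = cplx_alg sR for sR :: "complex \<Rightarrow> 'r::ring \<Rightarrow> 'r" +
  assumes nondeg: "nondegenerate TYPE('r)"
begin

lemma mult_right_cancel: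
  fixes x y :: 'r
  assumes "\<And>z. x * z = y * z"
  shows "x = y"
proof -
  have "\<forall>z. (x - y) * z = 0"
    using assms by (simp add: left_diff_distrib)
  then have "x - y = 0"
    using nondeg unfolding nondegenerate_def by blast
  then show ?thesis
    by simp
qed

lemma mult_left_cancel:
  fixes x y :: 'r
  assumes "\<And>z. z * x = z * y"
  shows "x = y"
proof -
  have "\<forall>z. z * (x - y) = 0"
    using assms by (simp add: right_diff_distrib)
  then have "x - y = 0"
    using nondeg unfolding nondegenerate_def by blast
  then show ?thesis
    by simp
qed

context
  fixes m :: "'r mult"
  assumes m: "is_multiplier m"
begin

lemma multiplier_balanced: "snd m x * y = x * fst m y"
  using m by (simp add: is_multiplier_def)

lemma lin_multiplier_fst: "lin sR sR (fst m)"
  unfolding lin_def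
proof (intro conjI allI)
  show "fst m (x + y) = fst m x + fst m y" for x y
    by (rule mult_left_cancel) (simp add: multiplier_balanced[symmetric] distrib_left)
  show "fst m (sR c x) = sR c (fst m x)" for c x
    by (rule mult_left_cancel) (simp add: multiplier_balanced[symmetric] scale_mult_R)
qed

lemma lin_multiplier_snd: "lin sR sR (snd m)"
  unfolding lin_def
proof (intro conjI allI)
  show "snd m (x + y) = snd m x + snd m y" for x y
    by (rule mult_right_cancel) (simp add: multiplier_balanced distrib_right)
  show "snd m (sR c x) = sR c (snd m x)" for c x
    by (rule mult_right_cancel) (simp add: multiplier_balanced scale_mult_R)
qed

lemma multiplier_fst_mult: "fst m (x * y) = fst m x * y"
  by (rule mult_left_cancel) (metis multiplier_balanced mult.assoc)

end

end

locale nondeg_module_alg = hopf_bij + hopf_module_alg + nondeg_alg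
begin

lemma act_mult_fst: "fst (act_mult \<Delta> S act a m) y = (\<Sum>(u, v)\<leftarrow>\<Delta> a. act u (fst m (act (S v) y)))"
  and act_mult_snd: "snd (act_mult \<Delta> S act a m) x = (\<Sum>(u, v)\<leftarrow>\<Delta> a. act v (snd m (act (inv S u) x)))"
  by (simp_all add: act_mult_def)

lemma act_inv_antipode_twisted: "(\<Sum>(u, v)\<leftarrow>\<Delta> a. act (v * inv S u) x) = sR (\<epsilon> a) x"
  using inv_antipode_twisted_apply[OF lin_act_coeff] by simp

lemma is_multiplier_act_mult:
  assumes m: "is_multiplier m"
  shows "is_multiplier (act_mult \<Delta> S act a m)"
  unfolding is_multiplier_def
proof (intro allI)
  fix x y
  note lin_intros = lin_R_intros lin_inv_S lin_compose[OF lin_multiplier_fst[OF m]]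
  define F where "F vs = act (vs!1 * inv S (vs!0)) x * act (vs!2) (fst m (act (S (vs!3)) y))" for vs
  have F: "multilin sA sR 3 F"
    by (simp add: F_def numeral_eq_Suc) (intro conjI allI impI lin_intros)
  have "snd (act_mult \<Delta> S act a m) x * y = (\<Sum>(u, v)\<leftarrow>\<Delta> a. act v (snd m (act (inv S u) x)) * y)"
    by (simp only: act_mult_snd sum_list_pairs_mult_right)
  also have "\<dots> = (\<Sum>(u, v)\<leftarrow>\<Delta> a. \<Sum>(p, q)\<leftarrow>\<Delta> v. act p (snd m (act (inv S u) x) * act (S q) y))"
    by (simp only: act_times)
  also have "\<dots> = (\<Sum>(u, v)\<leftarrow>\<Delta> a. \<Sum>(p, q)\<leftarrow>\<Delta> v. \<Sum>(p1, p2)\<leftarrow>\<Delta> p.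
      act p1 (act (inv S u) x) * act p2 (fst m (act (S q) y)))"
    by (simp only: multiplier_balanced[OF m] act_prod)
  also have "\<dots> = sweedler \<Delta> 2 a (\<lambda>vs. \<Sum>(p, q)\<leftarrow>\<Delta> (vs!1). F [vs!0, p, q, vs!2])"
    by (simp add: numeral_eq_Suc F_def act_assoc)
  also have "\<dots> = sweedler \<Delta> 3 a F"
    by (rule sweedler_split[OF vector_space_R, where k=1, OF _ F]) (auto simp: length_Suc_conv numeral_eq_Suc)
  also have "\<dots> = sweedler \<Delta> 2 a (\<lambda>vs. \<Sum>(p, q)\<leftarrow>\<Delta> (vs!0). F [p, q, vs!1, vs!2])"
    by (rule sweedler_split[OF vector_space_R, where k=0, OF _ F, symmetric])
      (auto simp: length_Suc_conv numeral_eq_Suc)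
  also have "\<dots> = sweedler \<Delta> 2 a (\<lambda>vs. sR (\<epsilon> (vs!0)) (x * act (vs!1) (fst m (act (S (vs!2)) y))))"
    by (rule sweedler_cong)
      (simp add: F_def sum_list_pairs_mult_right[symmetric] act_inv_antipode_twisted scale_mult_R)
  also have "\<dots> = (\<Sum>(u, r)\<leftarrow>\<Delta> a. sR (\<epsilon> u) (\<Sum>(p, q)\<leftarrow>\<Delta> r. x * act p (fst m (act (S q) y))))"
    by (simp add: numeral_eq_Suc scale_sum_list[OF vector_space_R])
  also have "\<dots> = x * fst (act_mult \<Delta> S act a m) y"
    by (subst counit_left_apply)
      (auto intro!: lin_sum_coproduct_compose[OF vector_space_R] bilinI lin_intros
        simp: act_mult_fst sum_list_pairs_mult_left)
  finally show "snd (act_mult \<Delta> S act a m) x * y = x * fst (act_mult \<Delta> S act a m) y" .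
qed

end

section \<open>Twisting \<open>R \<otimes> A\<close>\<close>

lemma tens_eqI:
  "(\<And>\<phi>. bilin_form sU sV \<phi> \<Longrightarrow> (\<Sum>(x, a)\<leftarrow>xs. \<phi> x a) = (\<Sum>(x, a)\<leftarrow>ys. \<phi> x a)) \<Longrightarrow>
    tens sU sV xs = tens sU sV ys"
  by (rule ext) (simp add: tens_def)

lemma tens_trep: "tens sU sV (trep sU sV (tens sU sV xs)) = tens sU sV xs"
  unfolding trep_def by (rule someI_ex) blast

lemma tadd_tens: "tadd (tens sU sV xs) (tens sU sV ys) = tens sU sV (xs @ ys)"
  by (rule ext) (simp add: tadd_def tens_def)

lemma bilin_form_lin:
  "bilin_form sU sV \<phi> \<Longrightarrow> lin sU (*) (\<lambda>x. \<phi> x v)" "bilin_form sU sV \<phi> \<Longrightarrow> lin sV (*) (\<phi> u)"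
  by (simp_all add: bilin_form_def Vector_Spaces.linear_iff lin_def)

lemma tscale_tens: "tscale c (tens sU sV xs) = tens sU sV (map (\<lambda>(x, a). (sU c x, a)) xs)"
proof (rule ext)
  fix \<phi> :: "'a \<Rightarrow> 'b \<Rightarrow> complex"
  show "tscale c (tens sU sV xs) \<phi> = tens sU sV (map (\<lambda>(x, a). (sU c x, a)) xs) \<phi>"
  proof (cases "bilin_form sU sV \<phi>")
    case True
    then have "(\<Sum>(x, a)\<leftarrow>map (\<lambda>(x, a). (sU c x, a)) xs. \<phi> x a) = c * (\<Sum>(x, a)\<leftarrow>xs. \<phi> x a)"
      by (simp only: sum_list_map_fst lin_scale[OF bilin_form_lin(1)] scale_sum_list[OF vector_space_complex])
    then show ?thesis
      using True by (simp add: tscale_def tens_def)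
  qed (simp add: tscale_def tens_def)
qed

context hopf_tensor
begin

definition twist_list :: "('a \<Rightarrow> 'r \<Rightarrow> 'r) \<Rightarrow> ('r \<times> 'a) list \<Rightarrow> ('r \<times> 'a) list" where
  "twist_list \<rho> xs = [(\<rho> u x, v). (x, a) \<leftarrow> xs, (u, v) \<leftarrow> \<Delta> a]"

definition twist :: "('a \<Rightarrow> 'r \<Rightarrow> 'r) \<Rightarrow> (('r \<Rightarrow> 'a \<Rightarrow> complex) \<Rightarrow> complex)
    \<Rightarrow> (('r \<Rightarrow> 'a \<Rightarrow> complex) \<Rightarrow> complex)" where
  "twist \<rho> t = tens sR sA (twist_list \<rho> (trep sR sA t))"

lemma sum_twist_list:
  "(\<Sum>(y, b)\<leftarrow>twist_list \<rho> xs. \<phi> y b) = (\<Sum>(x, a)\<leftarrow>xs. \<Sum>(u, v)\<leftarrow>\<Delta> a. \<phi> (\<rho> u x) v)"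
  by (induction xs) (auto simp: twist_list_def sum_list_map_fst comp_def case_prod_beta)

lemma twist_list_append: "twist_list \<rho> (xs @ ys) = twist_list \<rho> xs @ twist_list \<rho> ys"
  by (simp add: twist_list_def)

lemma twist_list_scale:
  "bilin sA sR sR \<rho> \<Longrightarrow>
    twist_list \<rho> (map (\<lambda>(x, a). (sR c x, a)) xs) = map (\<lambda>(x, a). (sR c x, a)) (twist_list \<rho> xs)"
  by (induction xs) (auto simp: twist_list_def bilin_def lin_def)

lemma twist_list_tens_eq:
  assumes \<rho>: "bilin sA sR sR \<rho>" and eq: "tens sR sA xs = tens sR sA ys"
  shows "tens sR sA (twist_list \<rho> xs) = tens sR sA (twist_list \<rho> ys)"
proof (rule tens_eqI)
  fix \<phi> :: "'r \<Rightarrow> 'a \<Rightarrow> complex" assume \<phi>: "bilin_form sR sA \<phi>"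
  show "(\<Sum>(x, a)\<leftarrow>twist_list \<rho> xs. \<phi> x a) = (\<Sum>(x, a)\<leftarrow>twist_list \<rho> ys. \<phi> x a)"
    unfolding sum_twist_list
    by (rule tens_eq_imp_sum_eq[OF eq vector_space_R vector_space_A vector_space_complex])
      (intro bilinI lin_sum_list_fun[OF vector_space_complex] lin_sum_coproduct_compose[OF vector_space_complex]
        lin_compose[OF bilin_form_lin(1)[OF \<phi>]]
        lin_compose[OF bilin_form_lin(2)[OF \<phi>]] lin_bilin_left[OF \<rho>] lin_bilin_right[OF \<rho>] lin_id)+
qed

lemma twist_tens: "bilin sA sR sR \<rho> \<Longrightarrow> twist \<rho> (tens sR sA xs) = tens sR sA (twist_list \<rho> xs)"
  unfolding twist_def using twist_list_tens_eq tens_trep by blast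

lemma twist_list_inverse:
  assumes \<rho>: "bilin sA sR sR \<rho>" and \<sigma>: "bilin sA sR sR \<sigma>"
    and inv: "\<And>a x. (\<Sum>(u, v)\<leftarrow>\<Delta> a. \<sigma> v (\<rho> u x)) = sR (\<epsilon> a) x"
  shows "tens sR sA (twist_list \<sigma> (twist_list \<rho> xs)) = tens sR sA xs"
proof (rule tens_eqI)
  fix \<phi> :: "'r \<Rightarrow> 'a \<Rightarrow> complex" assume \<phi>: "bilin_form sR sA \<phi>"
  note lin_\<phi> = bilin_form_lin[OF \<phi>]
  have "(\<Sum>(u, v)\<leftarrow>\<Delta> a. \<Sum>(p, q)\<leftarrow>\<Delta> v. \<phi> (\<sigma> p (\<rho> u x)) q) = \<phi> x a" for x a
  proof -
    have "(\<Sum>(u, v)\<leftarrow>\<Delta> a. \<Sum>(p, q)\<leftarrow>\<Delta> v. \<phi> (\<sigma> p (\<rho> u x)) q)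
        = (\<Sum>(f, q)\<leftarrow>\<Delta> a. \<Sum>(u, p)\<leftarrow>\<Delta> f. \<phi> (\<sigma> p (\<rho> u x)) q)"
      by (rule coassoc[OF vector_space_complex, symmetric])
        (intro lin_compose[OF lin_\<phi>(1)] lin_compose[OF lin_\<phi>(2)] lin_bilin_left[OF \<rho>]
          lin_bilin_right[OF \<rho>] lin_bilin_left[OF \<sigma>] lin_bilin_right[OF \<sigma>] lin_id)+
    also have "\<dots> = (\<Sum>(f, q)\<leftarrow>\<Delta> a. \<phi> (sR (\<epsilon> f) x) q)"
      by (simp add: lin_sum_list[OF lin_\<phi>(1), symmetric] inv)
    also have "\<dots> = \<phi> x a"
      by (simp add: lin_scale[OF lin_\<phi>(1)] lin_scale[OF lin_\<phi>(2), symmetric]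
          lin_sum_list[OF lin_\<phi>(2), symmetric] counit_left)
    finally show ?thesis .
  qed
  then show "(\<Sum>(x, a)\<leftarrow>twist_list \<sigma> (twist_list \<rho> xs). \<phi> x a) = (\<Sum>(x, a)\<leftarrow>xs. \<phi> x a)"
    by (simp add: sum_twist_list)
qed

definition smash_list :: "('a \<Rightarrow> 'r \<Rightarrow> 'r) \<Rightarrow> ('r \<times> 'a) list \<Rightarrow> ('r \<times> 'a) list \<Rightarrow> ('r \<times> 'a) list" where
  "smash_list act xs ys = [(x * act u x', v * a'). (x, a) \<leftarrow> xs, (x', a') \<leftarrow> ys, (u, v) \<leftarrow> \<Delta> a]"

lemma sum_smash_list:
  "(\<Sum>(y, b)\<leftarrow>smash_list act xs ys. \<phi> y b) =
    (\<Sum>(x, a)\<leftarrow>xs. \<Sum>(x', a')\<leftarrow>ys. \<Sum>(u, v)\<leftarrow>\<Delta> a. \<phi> (x * act u x') (v * a'))"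
proof -
  have inner: "(\<Sum>(y, b)\<leftarrow>concat (map (\<lambda>(x', a'). map (\<lambda>(u, v). (x * act u x', v * a')) (\<Delta> a)) ys). \<phi> y b)
      = (\<Sum>(x', a')\<leftarrow>ys. \<Sum>(u, v)\<leftarrow>\<Delta> a. \<phi> (x * act u x') (v * a'))" for x a
    by (induction ys) (auto simp: comp_def case_prod_beta)
  show ?thesis
    by (induction xs) (auto simp: smash_list_def inner)
qed

lemma twist_in_tensor_space: "twist \<rho> t \<in> tensor_space sR sA"
  by (simp add: twist_def tensor_space_def)

lemma twist_tadd:
  "bilin sA sR sR \<rho> \<Longrightarrow> t \<in> tensor_space sR sA \<Longrightarrow> t' \<in> tensor_space sR sA \<Longrightarrow>
    twist \<rho> (tadd t t') = tadd (twist \<rho> t) (twist \<rho> t')"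
  by (auto simp: tensor_space_def tadd_tens twist_tens twist_list_append)

lemma twist_tscale:
  "bilin sA sR sR \<rho> \<Longrightarrow> t \<in> tensor_space sR sA \<Longrightarrow> twist \<rho> (tscale c t) = tscale c (twist \<rho> t)"
  by (auto simp: tensor_space_def tscale_tens twist_tens twist_list_scale)

lemma twist_inverse:
  "bilin sA sR sR \<rho> \<Longrightarrow> bilin sA sR sR \<sigma> \<Longrightarrow> (\<And>a x. (\<Sum>(u, v)\<leftarrow>\<Delta> a. \<sigma> v (\<rho> u x)) = sR (\<epsilon> a) x) \<Longrightarrow>
    t \<in> tensor_space sR sA \<Longrightarrow> twist \<sigma> (twist \<rho> t) = t"
  by (auto simp: tensor_space_def twist_tens twist_list_inverse)

text \<open>Multiplicativity is assumed only for \<open>twist \<sigma>\<close>; it passes to its inverse \<open>twist \<rho>\<close>.\<close>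

lemma smash_isomorphic_twist:
  assumes \<rho>: "bilin sA sR sR \<rho>" and \<sigma>: "bilin sA sR sR \<sigma>"
    and \<sigma>\<rho>: "\<And>a x. (\<Sum>(u, v)\<leftarrow>\<Delta> a. \<sigma> v (\<rho> u x)) = sR (\<epsilon> a) x"
    and \<rho>\<sigma>: "\<And>a x. (\<Sum>(u, v)\<leftarrow>\<Delta> a. \<rho> v (\<sigma> u x)) = sR (\<epsilon> a) x"
    and hom: "\<And>t t'. t \<in> tensor_space sR sA \<Longrightarrow> t' \<in> tensor_space sR sA \<Longrightarrow>
      twist \<sigma> (smash_mult sR sA \<Delta> act2 t t') = smash_mult sR sA \<Delta> act1 (twist \<sigma> t) (twist \<sigma> t')"
  shows "smash_isomorphic sR sA \<Delta> act1 act2"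
  unfolding smash_isomorphic_def
proof (intro exI conjI ballI allI)
  note inv1 = twist_inverse[OF \<rho> \<sigma> \<sigma>\<rho>] and inv2 = twist_inverse[OF \<sigma> \<rho> \<rho>\<sigma>]
  show "bij_betw (twist \<rho>) (tensor_space sR sA) (tensor_space sR sA)"
    by (rule bij_betw_byWitness[where f'="twist \<sigma>"]) (auto simp: inv1 inv2 twist_in_tensor_space)
  fix t t' assume t: "t \<in> tensor_space sR sA" and t': "t' \<in> tensor_space sR sA"
  show "twist \<rho> (tadd t t') = tadd (twist \<rho> t) (twist \<rho> t')"
    by (rule twist_tadd[OF \<rho> t t'])
  have "smash_mult sR sA \<Delta> act1 t t' = twist \<sigma> (smash_mult sR sA \<Delta> act2 (twist \<rho> t) (twist \<rho> t'))"
    by (simp add: hom twist_in_tensor_space inv1 t t')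
  then show "twist \<rho> (smash_mult sR sA \<Delta> act1 t t') = smash_mult sR sA \<Delta> act2 (twist \<rho> t) (twist \<rho> t')"
    by (simp add: inv2 smash_mult_def tensor_space_def)
next
  fix c t assume "t \<in> tensor_space sR sA"
  then show "twist \<rho> (tscale c t) = tscale c (twist \<rho> t)"
    by (rule twist_tscale[OF \<rho>])
qed

end

context hopf_module_alg
begin

lemma smash_list_tens_eq:
  assumes xs: "tens sR sA xs = tens sR sA xs'" and ys: "tens sR sA ys = tens sR sA ys'"
  shows "tens sR sA (smash_list act xs ys) = tens sR sA (smash_list act xs' ys')"
proof (rule tens_eqI)
  fix \<phi> :: "'r \<Rightarrow> 'a \<Rightarrow> complex" assume \<phi>: "bilin_form sR sA \<phi>"
  note lin_\<phi> = bilin_form_lin[OF \<phi>]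
  note lin_intros = bilinI lin_sum_list_fun[OF vector_space_complex] lin_sum_coproduct_compose[OF vector_space_complex]
    lin_compose[OF lin_\<phi>(1)] lin_compose[OF lin_\<phi>(2)] lin_R_intros
  note eq = tens_eq_imp_sum_eq[OF _ vector_space_R vector_space_A vector_space_complex]
  have "(\<Sum>(x, a)\<leftarrow>xs. \<Sum>(x', a')\<leftarrow>ys. \<Sum>(u, v)\<leftarrow>\<Delta> a. \<phi> (x * act u x') (v * a'))
      = (\<Sum>(x', a')\<leftarrow>ys. \<Sum>(x, a)\<leftarrow>xs'. \<Sum>(u, v)\<leftarrow>\<Delta> a. \<phi> (x * act u x') (v * a'))"
    by (subst eq[OF xs]) (intro lin_intros, rule sum_list_pairs_swap)
  also have "\<dots> = (\<Sum>(x, a)\<leftarrow>xs'. \<Sum>(x', a')\<leftarrow>ys'. \<Sum>(u, v)\<leftarrow>\<Delta> a. \<phi> (x * act u x') (v * a'))"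
    by (subst eq[OF ys]) (intro lin_intros, rule sum_list_pairs_swap)
  finally show "(\<Sum>(x, a)\<leftarrow>smash_list act xs ys. \<phi> x a) = (\<Sum>(x, a)\<leftarrow>smash_list act xs' ys'. \<phi> x a)"
    by (simp only: sum_smash_list)
qed

lemma smash_mult_tens:
  "smash_mult sR sA \<Delta> act (tens sR sA xs) (tens sR sA ys) = tens sR sA (smash_list act xs ys)"
  unfolding smash_mult_def smash_list_def[symmetric] by (rule smash_list_tens_eq) (rule tens_trep)+

end

section \<open>The cocycle and its convolution inverse\<close>

lemma fst_msum: "fst (msum (map (\<lambda>(u, v). f u v) xs)) x = (\<Sum>(u, v)\<leftarrow>xs. fst (f u v) x)"
  and snd_msum: "snd (msum (map (\<lambda>(u, v). f u v) xs)) x = (\<Sum>(u, v)\<leftarrow>xs. snd (f u v) x)"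
  by (induction xs) (auto simp: msum_def madd_def)

locale cocycle_equiv = nondeg_module_alg sA \<Delta> \<epsilon> S sR act1 + act2: hopf_module_alg sA \<Delta> \<epsilon> S sR act2
  for sA :: "complex \<Rightarrow> 'a::ring_1 \<Rightarrow> 'a" and \<Delta> \<epsilon> S and sR :: "complex \<Rightarrow> 'r::ring \<Rightarrow> 'r"
    and act1 act2 +
  fixes \<gamma> :: "'a \<Rightarrow> 'r mult"
  assumes cocycle: "cocycle_equivalent sA \<Delta> S sR act1 act2 \<gamma>"
begin

lemma gamma_multiplier: "is_multiplier (\<gamma> a)"
  and gamma_one: "\<gamma> 1 = mone"
  and cocycle_intertwines:
    "(\<Sum>(u, v)\<leftarrow>\<Delta> a. snd (\<gamma> v) (act2 u x)) = (\<Sum>(u, v)\<leftarrow>\<Delta> a. fst (\<gamma> u) (act1 v x))"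
  using cocycle by (simp_all add: cocycle_equivalent_def)

lemma lin_gamma_fst: "lin sA sR (\<lambda>a. fst (\<gamma> a) x)"
  and lin_gamma_snd: "lin sA sR (\<lambda>a. snd (\<gamma> a) x)"
  using cocycle by (simp_all add: cocycle_equivalent_def lin_def madd_def mscale_def)

lemma cocycle_fst:
  "fst (\<gamma> (a * b)) x = (\<Sum>(u, v)\<leftarrow>\<Delta> a. fst (\<gamma> u) (fst (act_mult \<Delta> S act1 v (\<gamma> b)) x))"
  and cocycle_snd:
  "snd (\<gamma> (a * b)) x = (\<Sum>(u, v)\<leftarrow>\<Delta> a. snd (act_mult \<Delta> S act1 v (\<gamma> b)) (snd (\<gamma> u) x))"
  using cocycle by (simp_all add: cocycle_equivalent_def fst_msum snd_msum mmult_def)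

lemmas lin_intros = lin_R_intros lin_inv_S lin_compose[OF lin_gamma_fst] lin_compose[OF lin_gamma_snd]
  lin_compose[OF lin_multiplier_fst[OF gamma_multiplier]] lin_compose[OF lin_multiplier_snd[OF gamma_multiplier]]

lemmas lin_sum_intros = lin_sum_list_fun[OF vector_space_R] lin_sum_coproduct_compose[OF vector_space_R]
  bilinI lin_intros

lemmas gamma_balanced = multiplier_balanced[OF gamma_multiplier]

lemma cocycle_intertwines_times:
  "(\<Sum>(u, v)\<leftarrow>\<Delta> c. x * act2 u x' * fst (\<gamma> v) y) = (\<Sum>(u, v)\<leftarrow>\<Delta> c. x * fst (\<gamma> u) (act1 v x') * y)"
proof -
  have "(\<Sum>(u, v)\<leftarrow>\<Delta> c. x * act2 u x' * fst (\<gamma> v) y) = x * ((\<Sum>(u, v)\<leftarrow>\<Delta> c. snd (\<gamma> v) (act2 u x')) * y)"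
    by (simp add: gamma_balanced mult.assoc sum_list_pairs_mult_right sum_list_pairs_mult_left)
  also have "\<dots> = x * ((\<Sum>(u, v)\<leftarrow>\<Delta> c. fst (\<gamma> u) (act1 v x')) * y)"
    by (simp only: cocycle_intertwines)
  also have "\<dots> = (\<Sum>(u, v)\<leftarrow>\<Delta> c. x * fst (\<gamma> u) (act1 v x') * y)"
    by (simp add: sum_list_pairs_mult_right sum_list_pairs_mult_left mult.assoc)
  finally show ?thesis .
qed

text \<open>Here \<open>snd (\<gamma> a) x = x \<gamma>(a)\<close>, so this reads
  \<open>\<Sum> (x (c\<^sub>1 \<triangleright>\<^sub>2 x')) \<gamma>(c\<^sub>2 p) = \<Sum> x \<gamma>(c\<^sub>1) (c\<^sub>2 \<triangleright>\<^sub>1 (x' \<gamma>(p)))\<close>: the multiplicativity of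
  \<open>x # a \<mapsto> \<Sum> x \<gamma>(a\<^sub>1) # a\<^sub>2\<close>.\<close>

lemma gamma_twisted_mult:
  "(\<Sum>(u, v)\<leftarrow>\<Delta> c. snd (\<gamma> (v * p)) (x * act2 u x')) = (\<Sum>(u, v)\<leftarrow>\<Delta> c. snd (\<gamma> u) x * act1 v (snd (\<gamma> p) x'))"
proof (rule mult_right_cancel)
  fix z
  define F1 where "F1 vs = x * act2 (vs!0) x' * fst (\<gamma> (vs!1)) (act1 (vs!2) (fst (\<gamma> p) (act1 (S (vs!3)) z)))"
    for vs
  define F2 where "F2 vs = x * fst (\<gamma> (vs!0)) (act1 (vs!1) x') * act1 (vs!2) (fst (\<gamma> p) (act1 (S (vs!3)) z))"
    for vs
  have F1: "multilin sA sR 3 F1"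
    by (simp add: F1_def numeral_eq_Suc) (intro conjI allI impI lin_intros act2.lin_R_intros)
  have F2: "multilin sA sR 3 F2"
    by (simp add: F2_def numeral_eq_Suc) (intro conjI allI impI lin_intros)
  have "(\<Sum>(u, v)\<leftarrow>\<Delta> c. snd (\<gamma> (v * p)) (x * act2 u x')) * z
      = (\<Sum>(u, v)\<leftarrow>\<Delta> c. (x * act2 u x') * fst (\<gamma> (v * p)) z)"
    by (simp add: sum_list_pairs_mult_right gamma_balanced)
  also have "\<dots> = sweedler \<Delta> 3 c F1"
    by (simp add: F1_def numeral_eq_Suc cocycle_fst act_mult_fst sum_list_pairs_mult_left
        lin_sum_list[OF lin_multiplier_fst[OF gamma_multiplier]])
  also have "\<dots> = sweedler \<Delta> 2 c (\<lambda>vs. \<Sum>(u, v)\<leftarrow>\<Delta> (vs!0). F1 [u, v, vs!1, vs!2])"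
    by (rule sweedler_split[OF vector_space_R, where k=0, OF _ F1, symmetric])
      (auto simp: length_Suc_conv numeral_eq_Suc)
  also have "\<dots> = sweedler \<Delta> 2 c (\<lambda>vs. \<Sum>(u, v)\<leftarrow>\<Delta> (vs!0). F2 [u, v, vs!1, vs!2])"
    by (rule sweedler_cong) (simp add: F1_def F2_def cocycle_intertwines_times)
  also have "\<dots> = sweedler \<Delta> 3 c F2"
    by (rule sweedler_split[OF vector_space_R, where k=0, OF _ F2]) (auto simp: length_Suc_conv numeral_eq_Suc)
  also have "\<dots> = sweedler \<Delta> 2 c (\<lambda>vs. \<Sum>(q1, q2)\<leftarrow>\<Delta> (vs!1). F2 [vs!0, q1, q2, vs!2])"
    by (rule sweedler_split[OF vector_space_R, where k=1, OF _ F2, symmetric])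
      (auto simp: length_Suc_conv numeral_eq_Suc)
  also have "\<dots> = (\<Sum>(u, v)\<leftarrow>\<Delta> c. \<Sum>(v1, v2)\<leftarrow>\<Delta> v. \<Sum>(q1, q2)\<leftarrow>\<Delta> v1.
      snd (\<gamma> u) x * (act1 q1 x' * act1 q2 (fst (\<gamma> p) (act1 (S v2) z))))"
    by (simp add: numeral_eq_Suc F2_def gamma_balanced multiplier_fst_mult[OF gamma_multiplier] mult.assoc)
  also have "\<dots> = (\<Sum>(u, v)\<leftarrow>\<Delta> c. snd (\<gamma> u) x * (\<Sum>(v1, v2)\<leftarrow>\<Delta> v. act1 v1 (snd (\<gamma> p) x' * act1 (S v2) z)))"
    by (simp only: gamma_balanced act_prod sum_list_pairs_mult_left)
  also have "\<dots> = (\<Sum>(u, v)\<leftarrow>\<Delta> c. snd (\<gamma> u) x * (act1 v (snd (\<gamma> p) x') * z))"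
    by (simp only: act_times)
  also have "\<dots> = (\<Sum>(u, v)\<leftarrow>\<Delta> c. snd (\<gamma> u) x * act1 v (snd (\<gamma> p) x')) * z"
    by (simp add: sum_list_pairs_mult_right mult.assoc)
  finally show "(\<Sum>(u, v)\<leftarrow>\<Delta> c. snd (\<gamma> (v * p)) (x * act2 u x')) * z
      = (\<Sum>(u, v)\<leftarrow>\<Delta> c. snd (\<gamma> u) x * act1 v (snd (\<gamma> p) x')) * z" .
qed

text \<open>Right multiplication by the convolution inverse \<open>\<gamma>\<^sup>-\<^sup>1(a) = \<Sum> a\<^sub>1 \<triangleright>\<^sub>1 \<gamma>(S a\<^sub>2)\<close> of \<open>\<gamma>\<close>.\<close>

definition gamma_inv_right :: "'a \<Rightarrow> 'r \<Rightarrow> 'r" where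
  "gamma_inv_right a x = (\<Sum>(u, v)\<leftarrow>\<Delta> a. snd (act_mult \<Delta> S act1 u (\<gamma> (S v))) x)"

lemma gamma_gamma_inv: "(\<Sum>(u, v)\<leftarrow>\<Delta> a. gamma_inv_right v (snd (\<gamma> u) x)) = sR (\<epsilon> a) x"
proof -
  define F where "F vs = snd (act_mult \<Delta> S act1 (vs!1) (\<gamma> (S (vs!2)))) (snd (\<gamma> (vs!0)) x)" for vs
  have F: "multilin sA sR 2 F"
    by (simp add: F_def act_mult_snd numeral_eq_Suc) (intro conjI allI impI lin_sum_intros)
  have "(\<Sum>(u, v)\<leftarrow>\<Delta> a. gamma_inv_right v (snd (\<gamma> u) x)) = sweedler \<Delta> 2 a F"
    by (simp add: numeral_eq_Suc F_def gamma_inv_right_def)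
  also have "\<dots> = sweedler \<Delta> 1 a (\<lambda>vs. \<Sum>(u, v)\<leftarrow>\<Delta> (vs!0). F [u, v, vs!1])"
    by (rule sweedler_split[OF vector_space_R, where k=0, OF _ F, symmetric])
      (auto simp: length_Suc_conv numeral_eq_Suc)
  also have "\<dots> = (\<Sum>(u, v)\<leftarrow>\<Delta> a. snd (\<gamma> (u * S v)) x)"
    by (simp add: F_def cocycle_snd)
  also have "\<dots> = sR (\<epsilon> a) x"
    by (simp add: antipode_right_apply[OF lin_gamma_snd] gamma_one mone_def)
  finally show ?thesis .
qed

text \<open>The cocycle identity (i) for \<open>\<Sum> \<gamma>(S d\<^sub>1 d\<^sub>2) = \<epsilon>(d)\<close>, with \<open>\<Delta>(S d\<^sub>1)\<close> rewritten by
  \<open>sum_coproduct_antipode\<close>.\<close>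

lemma gamma_antipode_cocycle:
  "sweedler \<Delta> 3 d (\<lambda>vs. fst (\<gamma> (S (vs!2))) (act1 (S (vs!1)) (fst (\<gamma> (vs!3)) (act1 (S (S (vs!0))) y))))
    = sR (\<epsilon> d) y"
proof -
  define X where "X vs = fst (\<gamma> (S (vs!2))) (act1 (S (vs!1)) (fst (\<gamma> (vs!3)) (act1 (S (S (vs!0))) y)))"
    for vs
  define Y where "Y vs = (\<Sum>(k1, k2)\<leftarrow>\<Delta> (vs!0). X [k1, k2, vs!1, vs!2])" for vs
  have X: "multilin sA sR 3 X"
    by (simp add: X_def numeral_eq_Suc) (intro conjI allI impI lin_sum_intros)
  have Y: "multilin sA sR 2 Y"
    by (simp add: Y_def X_def numeral_eq_Suc) (intro conjI allI impI lin_sum_intros)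
  have "sR (\<epsilon> d) y = (\<Sum>(g, h)\<leftarrow>\<Delta> d. fst (\<gamma> (S g * h)) y)"
    by (simp add: antipode_left_apply[OF lin_gamma_fst] gamma_one mone_def)
  also have "\<dots> = (\<Sum>(g, h)\<leftarrow>\<Delta> d. \<Sum>(u, v)\<leftarrow>\<Delta> (S g).
      fst (\<gamma> u) (\<Sum>(v1, v2)\<leftarrow>\<Delta> v. act1 v1 (fst (\<gamma> h) (act1 (S v2) y))))"
    by (simp add: cocycle_fst act_mult_fst)
  also have "\<dots> = (\<Sum>(g, h)\<leftarrow>\<Delta> d. \<Sum>(g1, g2)\<leftarrow>\<Delta> g.
      fst (\<gamma> (S g2)) (\<Sum>(v1, v2)\<leftarrow>\<Delta> (S g1). act1 v1 (fst (\<gamma> h) (act1 (S v2) y))))"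
    by (subst sum_coproduct_antipode[OF vector_space_R]) (intro lin_sum_intros, simp)
  also have "\<dots> = (\<Sum>(g, h)\<leftarrow>\<Delta> d. \<Sum>(g1, g2)\<leftarrow>\<Delta> g. \<Sum>(k1, k2)\<leftarrow>\<Delta> g1. X [k1, k2, g2, h])"
    by (subst sum_coproduct_antipode[OF vector_space_R])
      (intro lin_sum_intros, simp add: X_def lin_sum_list[OF lin_multiplier_fst[OF gamma_multiplier]])
  also have "\<dots> = sweedler \<Delta> 1 d (\<lambda>vs. \<Sum>(g1, g2)\<leftarrow>\<Delta> (vs!0). Y [g1, g2, vs!1])"
    by (simp add: Y_def)
  also have "\<dots> = sweedler \<Delta> 2 d Y"
    by (rule sweedler_split[OF vector_space_R, where k=0, OF _ Y]) (auto simp: length_Suc_conv numeral_eq_Suc)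
  also have "\<dots> = sweedler \<Delta> 3 d X"
    by (rule sweedler_split[OF vector_space_R, where k=0, OF _ X]) (auto simp: length_Suc_conv numeral_eq_Suc Y_def)
  finally show ?thesis
    unfolding X_def[abs_def] by simp
qed

text \<open>The next two lemmas compute the left action of \<open>\<Sum> \<gamma>\<^sup>-\<^sup>1(b\<^sub>1) \<gamma>(b\<^sub>2)\<close>: inserting
  \<open>b\<^sub>i S(b\<^sub>i\<^sub>+\<^sub>1)\<close> produces the pattern of \<open>gamma_antipode_cocycle\<close>.\<close>

lemma sweedler_act_gamma_insert_antipode:
  "sweedler \<Delta> 3 b (\<lambda>vs. act1 (vs!0) (fst (\<gamma> (S (vs!2))) (act1 (S (vs!1)) (fst (\<gamma> (vs!3)) z))))
    = sweedler \<Delta> 5 b (\<lambda>vs. act1 (vs!0) (fst (\<gamma> (S (vs!4))) (act1 (S (vs!3))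
        (fst (\<gamma> (vs!5)) (act1 (S (S (vs!2))) (act1 (S (vs!1)) z))))))"
  (is "sweedler \<Delta> 3 b ?M = sweedler \<Delta> 5 b ?F")
proof -
  define H where "H vs = sR (\<epsilon> (vs!1)) (?M [vs!0, vs!2, vs!3, vs!4])" for vs
  have M: "multilin sA sR 3 ?M"
    by (simp add: numeral_eq_Suc) (intro conjI allI impI lin_intros)
  have H: "multilin sA sR 4 H"
    by (simp add: H_def numeral_eq_Suc) (intro conjI allI impI lin_intros)
  have F: "multilin sA sR 5 ?F"
    by (simp add: numeral_eq_Suc) (intro conjI allI impI lin_intros)
  have "sweedler \<Delta> 3 b ?M = sweedler \<Delta> 3 b (\<lambda>vs. \<Sum>(p, q)\<leftarrow>\<Delta> (vs!0). H [p, q, vs!1, vs!2, vs!3])"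
  proof (rule sweedler_cong)
    fix vs :: "'a list" assume "length vs = Suc 3"
    then have vs: "vs = [vs!0, vs!1, vs!2, vs!3]"
      by (auto simp: length_Suc_conv numeral_eq_Suc)
    have "(\<Sum>(p, q)\<leftarrow>\<Delta> (vs!0). H [p, q, vs!1, vs!2, vs!3]) = ?M [vs!0, vs!1, vs!2, vs!3]"
      by (simp add: H_def) (rule counit_right_apply, intro lin_intros)
    then show "?M vs = (\<Sum>(p, q)\<leftarrow>\<Delta> (vs!0). H [p, q, vs!1, vs!2, vs!3])"
      using vs by simp
  qed
  also have "\<dots> = sweedler \<Delta> 4 b H"
    by (rule sweedler_split[OF vector_space_R, where k=0, OF _ H]) (auto simp: length_Suc_conv numeral_eq_Suc)
  also have "\<dots> = sweedler \<Delta> 4 b (\<lambda>vs. \<Sum>(p, q)\<leftarrow>\<Delta> (vs!1). ?F [vs!0, p, q, vs!2, vs!3, vs!4])"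
  proof (rule sweedler_cong)
    fix vs :: "'a list"
    have "(\<Sum>(p, q)\<leftarrow>\<Delta> (vs!1). ?F [vs!0, p, q, vs!2, vs!3, vs!4])
        = (\<Sum>(p, q)\<leftarrow>\<Delta> (vs!1). (\<lambda>w. act1 (vs!0) (fst (\<gamma> (S (vs!3))) (act1 (S (vs!2))
            (fst (\<gamma> (vs!4)) (act1 (S w) z))))) (p * S q))"
      by (simp add: antipode_mult act_assoc)
    also have "\<dots> = H vs"
      by (subst antipode_right_apply[where t=sR]) (intro lin_intros, simp add: H_def antipode_one)
    finally show "H vs = (\<Sum>(p, q)\<leftarrow>\<Delta> (vs!1). ?F [vs!0, p, q, vs!2, vs!3, vs!4])"
      by simp
  qed
  also have "\<dots> = sweedler \<Delta> 5 b ?F"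
    by (rule sweedler_split[OF vector_space_R, where k=1, OF _ F]) (auto simp: length_Suc_conv numeral_eq_Suc)
  finally show ?thesis .
qed

lemma sweedler_act_gamma_antipode_eq_counit:
  "sweedler \<Delta> 5 b (\<lambda>vs. act1 (vs!0) (fst (\<gamma> (S (vs!4))) (act1 (S (vs!3))
      (fst (\<gamma> (vs!5)) (act1 (S (S (vs!2))) (act1 (S (vs!1)) z)))))) = sR (\<epsilon> b) z"
proof -
  have "sweedler \<Delta> 3 d (\<lambda>ds. act1 u (fst (\<gamma> (S (ds!2))) (act1 (S (ds!1))
      (fst (\<gamma> (ds!3)) (act1 (S (S (ds!0))) (act1 (S v) z)))))) = act1 u (sR (\<epsilon> d) (act1 (S v) z))" for u v d
    by (subst sweedler_lin_map[OF lin_act]) (simp only: gamma_antipode_cocycle)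
  then have "sweedler \<Delta> 5 b (\<lambda>vs. act1 (vs!0) (fst (\<gamma> (S (vs!4))) (act1 (S (vs!3))
      (fst (\<gamma> (vs!5)) (act1 (S (S (vs!2))) (act1 (S (vs!1)) z))))))
      = sweedler \<Delta> 2 b (\<lambda>vs. act1 (vs!0) (sR (\<epsilon> (vs!2)) (act1 (S (vs!1)) z)))"
    by (simp add: numeral_eq_Suc)
  also have "\<dots> = (\<Sum>(u, r)\<leftarrow>\<Delta> b. \<Sum>(p, q)\<leftarrow>\<Delta> r. sR (\<epsilon> q) (act1 u (act1 (S p) z)))"
    by (simp add: numeral_eq_Suc lin_scale[OF lin_act])
  also have "\<dots> = (\<Sum>(u, r)\<leftarrow>\<Delta> b. act1 (u * S r) z)"
    by (subst counit_right_apply) (intro lin_intros, simp add: act_assoc)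
  also have "\<dots> = sR (\<epsilon> b) z"
    by (subst antipode_right_apply[where t=sR]) (intro lin_intros, simp)
  finally show ?thesis .
qed

lemma gamma_inv_gamma_fst:
  "(\<Sum>(u, v)\<leftarrow>\<Delta> b. \<Sum>(u1, u2)\<leftarrow>\<Delta> u. fst (act_mult \<Delta> S act1 u1 (\<gamma> (S u2))) (fst (\<gamma> v) z)) = sR (\<epsilon> b) z"
proof -
  define M where "M vs = fst (act_mult \<Delta> S act1 (vs!0) (\<gamma> (S (vs!1)))) (fst (\<gamma> (vs!2)) z)" for vs
  define M' where "M' vs = act1 (vs!0) (fst (\<gamma> (S (vs!2))) (act1 (S (vs!1)) (fst (\<gamma> (vs!3)) z)))" for vs
  have M: "multilin sA sR 2 M"
    by (simp add: M_def act_mult_fst numeral_eq_Suc) (intro conjI allI impI lin_sum_intros)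
  have M': "multilin sA sR 3 M'"
    by (simp add: M'_def numeral_eq_Suc) (intro conjI allI impI lin_intros)
  have "(\<Sum>(u, v)\<leftarrow>\<Delta> b. \<Sum>(u1, u2)\<leftarrow>\<Delta> u. fst (act_mult \<Delta> S act1 u1 (\<gamma> (S u2))) (fst (\<gamma> v) z))
      = sweedler \<Delta> 1 b (\<lambda>vs. \<Sum>(u1, u2)\<leftarrow>\<Delta> (vs!0). M [u1, u2, vs!1])"
    by (simp add: M_def)
  also have "\<dots> = sweedler \<Delta> 2 b M"
    by (rule sweedler_split[OF vector_space_R, where k=0, OF _ M]) (auto simp: length_Suc_conv numeral_eq_Suc)
  also have "\<dots> = sweedler \<Delta> 2 b (\<lambda>vs. \<Sum>(p, q)\<leftarrow>\<Delta> (vs!0). M' [p, q, vs!1, vs!2])"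
    by (rule sweedler_cong) (simp add: M_def M'_def act_mult_fst)
  also have "\<dots> = sweedler \<Delta> 3 b M'"
    by (rule sweedler_split[OF vector_space_R, where k=0, OF _ M']) (auto simp: length_Suc_conv numeral_eq_Suc)
  also have "\<dots> = sR (\<epsilon> b) z"
    unfolding M'_def[abs_def]
    by (simp only: sweedler_act_gamma_insert_antipode sweedler_act_gamma_antipode_eq_counit)
  finally show ?thesis .
qed

lemma gamma_inv_gamma: "(\<Sum>(u, v)\<leftarrow>\<Delta> a. snd (\<gamma> v) (gamma_inv_right u x)) = sR (\<epsilon> a) x"
proof (rule mult_right_cancel)
  fix z
  have "(\<Sum>(u, v)\<leftarrow>\<Delta> a. snd (\<gamma> v) (gamma_inv_right u x)) * z
      = (\<Sum>(u, v)\<leftarrow>\<Delta> a. \<Sum>(u1, u2)\<leftarrow>\<Delta> u. snd (act_mult \<Delta> S act1 u1 (\<gamma> (S u2))) x * fst (\<gamma> v) z)"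
    by (simp add: sum_list_pairs_mult_right gamma_balanced gamma_inv_right_def)
  also have "\<dots> = x * (\<Sum>(u, v)\<leftarrow>\<Delta> a. \<Sum>(u1, u2)\<leftarrow>\<Delta> u.
      fst (act_mult \<Delta> S act1 u1 (\<gamma> (S u2))) (fst (\<gamma> v) z))"
    by (simp add: sum_list_pairs_mult_left multiplier_balanced[OF is_multiplier_act_mult[OF gamma_multiplier]])
  also have "\<dots> = sR (\<epsilon> a) x * z"
    by (simp add: gamma_inv_gamma_fst scale_mult_R)
  finally show "(\<Sum>(u, v)\<leftarrow>\<Delta> a. snd (\<gamma> v) (gamma_inv_right u x)) * z = sR (\<epsilon> a) x * z" .
qed

lemma sum_gamma_smash:
  assumes \<phi>: "bilin_form sR sA \<phi>"
  shows "(\<Sum>(u, v)\<leftarrow>\<Delta> a. \<Sum>(w, q)\<leftarrow>\<Delta> (v * a'). \<phi> (snd (\<gamma> w) (x * act2 u x')) q)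
    = (\<Sum>(u, v)\<leftarrow>\<Delta> a. \<Sum>(p, q)\<leftarrow>\<Delta> a'. \<Sum>(v1, v2)\<leftarrow>\<Delta> v. \<phi> (snd (\<gamma> u) x * act1 v1 (snd (\<gamma> p) x')) (v2 * q))"
proof -
  note lin_\<phi> = bilin_form_lin[OF \<phi>]
  note intros = bilinI lin_sum_list_fun[OF vector_space_complex] lin_compose[OF lin_\<phi>(1)]
    lin_compose[OF lin_\<phi>(2)] lin_intros act2.lin_R_intros
  note pull_sum = lin_sum_list[OF lin_\<phi>(1)]
  have "(\<Sum>(u, v)\<leftarrow>\<Delta> a. \<Sum>(w, q)\<leftarrow>\<Delta> (v * a'). \<phi> (snd (\<gamma> w) (x * act2 u x')) q)
      = (\<Sum>(u, v)\<leftarrow>\<Delta> a. \<Sum>(v1, v2)\<leftarrow>\<Delta> v. \<Sum>(p, q)\<leftarrow>\<Delta> a'. \<phi> (snd (\<gamma> (v1 * p)) (x * act2 u x')) (v2 * q))"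
    by (subst sum_coproduct_mult[OF vector_space_complex]) (intro intros, rule refl)
  also have "\<dots> = (\<Sum>(e, v2)\<leftarrow>\<Delta> a. \<Sum>(u, v1)\<leftarrow>\<Delta> e. \<Sum>(p, q)\<leftarrow>\<Delta> a'.
      \<phi> (snd (\<gamma> (v1 * p)) (x * act2 u x')) (v2 * q))"
    by (rule coassoc[OF vector_space_complex, symmetric]) (intro intros)+
  also have "\<dots> = (\<Sum>(e, v2)\<leftarrow>\<Delta> a. \<Sum>(p, q)\<leftarrow>\<Delta> a'.
      \<phi> (\<Sum>(u, v1)\<leftarrow>\<Delta> e. snd (\<gamma> (v1 * p)) (x * act2 u x')) (v2 * q))"
    by (simp add: pull_sum sum_list_pairs_swap[where ys="\<Delta> a'"])
  also have "\<dots> = (\<Sum>(e, v2)\<leftarrow>\<Delta> a. \<Sum>(p, q)\<leftarrow>\<Delta> a'.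
      \<phi> (\<Sum>(u, v1)\<leftarrow>\<Delta> e. snd (\<gamma> u) x * act1 v1 (snd (\<gamma> p) x')) (v2 * q))"
    by (simp only: gamma_twisted_mult)
  also have "\<dots> = (\<Sum>(e, v2)\<leftarrow>\<Delta> a. \<Sum>(u, v1)\<leftarrow>\<Delta> e. \<Sum>(p, q)\<leftarrow>\<Delta> a'.
      \<phi> (snd (\<gamma> u) x * act1 v1 (snd (\<gamma> p) x')) (v2 * q))"
    by (simp add: pull_sum sum_list_pairs_swap[where ys="\<Delta> a'"])
  also have "\<dots> = (\<Sum>(u, v)\<leftarrow>\<Delta> a. \<Sum>(v1, v2)\<leftarrow>\<Delta> v. \<Sum>(p, q)\<leftarrow>\<Delta> a'.
      \<phi> (snd (\<gamma> u) x * act1 v1 (snd (\<gamma> p) x')) (v2 * q))"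
    by (rule coassoc[OF vector_space_complex]) (intro intros)+
  also have "\<dots> = (\<Sum>(u, v)\<leftarrow>\<Delta> a. \<Sum>(p, q)\<leftarrow>\<Delta> a'. \<Sum>(v1, v2)\<leftarrow>\<Delta> v.
      \<phi> (snd (\<gamma> u) x * act1 v1 (snd (\<gamma> p) x')) (v2 * q))"
    by (simp add: sum_list_pairs_swap[where ys="\<Delta> a'"])
  finally show ?thesis .
qed

lemma bilin_gamma: "bilin sA sR sR (\<lambda>u. snd (\<gamma> u))"
  by (intro bilinI lin_gamma_snd lin_multiplier_snd[OF gamma_multiplier])

lemma bilin_gamma_inv_right: "bilin sA sR sR gamma_inv_right"
  unfolding gamma_inv_right_def act_mult_snd by (intro lin_sum_intros)

lemma twist_gamma_smash_mult:
  assumes "t \<in> tensor_space sR sA" and "t' \<in> tensor_space sR sA"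
  shows "twist (\<lambda>u. snd (\<gamma> u)) (smash_mult sR sA \<Delta> act2 t t')
    = smash_mult sR sA \<Delta> act1 (twist (\<lambda>u. snd (\<gamma> u)) t) (twist (\<lambda>u. snd (\<gamma> u)) t')"
proof -
  obtain xs ys where t: "t = tens sR sA xs" and t': "t' = tens sR sA ys"
    using assms by (auto simp: tensor_space_def)
  have "tens sR sA (twist_list (\<lambda>u. snd (\<gamma> u)) (smash_list act2 xs ys))
      = tens sR sA (smash_list act1 (twist_list (\<lambda>u. snd (\<gamma> u)) xs) (twist_list (\<lambda>u. snd (\<gamma> u)) ys))"
  proof (rule tens_eqI)
    fix \<phi> :: "'r \<Rightarrow> 'a \<Rightarrow> complex" assume \<phi>: "bilin_form sR sA \<phi>"
    show "(\<Sum>(y, b)\<leftarrow>twist_list (\<lambda>u. snd (\<gamma> u)) (smash_list act2 xs ys). \<phi> y b)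
        = (\<Sum>(y, b)\<leftarrow>smash_list act1 (twist_list (\<lambda>u. snd (\<gamma> u)) xs) (twist_list (\<lambda>u. snd (\<gamma> u)) ys). \<phi> y b)"
      by (simp add: sum_twist_list sum_smash_list sum_gamma_smash[OF \<phi>] sum_list_pairs_swap[where xs=ys])
  qed
  then show ?thesis
    by (simp add: t t' smash_mult_tens act2.smash_mult_tens twist_tens[OF bilin_gamma])
qed

theorem smash_products_isomorphic:
  "smash_isomorphic sR sA \<Delta> act1 act2"
  by (rule smash_isomorphic_twist[OF bilin_gamma_inv_right bilin_gamma gamma_inv_gamma gamma_gamma_inv
        twist_gamma_smash_mult])

end

theorem proposition5p13:
  fixes sA :: "complex \<Rightarrow> 'a::ring_1 \<Rightarrow> 'a"
    and \<Delta> :: "'a \<Rightarrow> ('a \<times> 'a) list"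
    and \<epsilon> :: "'a \<Rightarrow> complex"
    and S :: "'a \<Rightarrow> 'a"
    and sR :: "complex \<Rightarrow> 'r::ring \<Rightarrow> 'r"
    and act1 act2 :: "'a \<Rightarrow> 'r \<Rightarrow> 'r"
    and \<gamma> :: "'a \<Rightarrow> 'r mult"
  assumes "hopf_algebra sA \<Delta> \<epsilon> S"
    and "bij S"
    and "cplx_algebra sR"
    and "nondegenerate TYPE('r)"
    and "module_algebra sA \<Delta> sR act1"
    and "module_algebra sA \<Delta> sR act2"
    and "cocycle_equivalent sA \<Delta> S sR act1 act2 \<gamma>"
  shows "smash_isomorphic sR sA \<Delta> act1 act2"
proof -
  interpret cocycle_equiv sA \<Delta> \<epsilon> S sR act1 act2 \<gamma>
    by unfold_locales (fact assms)+
  show ?thesis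
    by (rule smash_products_isomorphic)
qed

end
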